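(* Let $\mathcal{H}=L^2(\mathcal{Z})$ and let $$X_i=\mu+\Delta_n\,g\!\left(\tfrac in\right)+\varepsilon_i,\qquad i=1,\ldots,n,$$ with $\mu,\Delta_n\in\mathcal{H}$ and $n\|\Delta_n\|^2\to\infty$. Assume that $g:[0,1]\to\mathbb{R}$ is non-constant, bounded, Riemann integrable and piecewise continuous (finitely many intervals of positive length on each of which it is continuous), with $g(0)=0$. Assume the errors satisfy the following two conditions. (A1) $\{\varepsilon_i\}_{i\in\mathbb{Z}}$ is a centered, strictly stationary sequence of $\mathcal{H}$-valued random variables with $\mathsf{E}\|\varepsilon_1\|^k<\infty$ for some $k>2$. With $C_r=\mathsf{E}[\varepsilon_0\otimes\varepsilon_r]$ one has $\sum_r\|C_r\|<\infty$, and $C_\varepsilon=\sum_rC_r\ne0$. Write $C_\varepsilon=\sum_{p\ge1}\lambda_{p,\varepsilon}v_{p,\varepsilon}\otimes v_{p,\varepsilon}$ with non-increasing eigenvalues and orthonormal basis $\{v_{p,\varepsilon}\}$. Moreover $\sum_{p\ge1}\sum_{h\in\mathbb{Z}}|\mathsf{Cov}(\langle\varepsilon_0,v_{p,\varepsilon}\rangle,\langle\varepsilon_h,v_{p,\varepsilon}\rangle)|<\infty$. (A2) $\{n^{-1/2}\sum_{i=1}^{\lfloor tn\rfloor}\varepsilon_i\}_{t\in[0,1]}$ converges weakly in $D^{\mathcal{H}}[0,1]$ to an $\mathcal{H}$-valued Brownian motion with covariance operator $C_\varepsilon$. Let $\hat C$ be a random bounded self-adjoint positive semidefinite operator computed from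 $X_1,\ldots,X_n$ with $\|\hat C\|=o_P(n\|\Delta_n\|^2)$. Fix $d\in\mathbb{N}$, let $\hat v_p$ be an orthonormal eigenfunction of $\hat C$ for its $p$-th largest eigenvalue $\hat\lambda_p$, and let $\hat\eta_{i,p}=\langle X_i,\hat v_p\rangle$ and $\bar{\hat\eta}_{n,p}=n^{-1}\sum_i\hat\eta_{i,p}$. Assume there exist orthonormal $\tilde v_1,\ldots,\tilde v_d\in\mathcal{H}$ such that for $p=1,\ldots,d$ $$\|\hat v_p-\tilde s_p\tilde v_p\|=o_P(1),\qquad \tilde s_p=\operatorname{sgn}\Big(\int\hat v_p(t)\tilde v_p(t)\,d\nu(t)\Big),$$ and that $\sum_{p=1}^d\langle\Delta_n,\tilde v_p\rangle^2\ge c\|\Delta_n\|^2$ for some $0<c\le1$. Let $h:[-1,1]\to\mathbb{R}$ be non-constant with $h(x)=0$ for $x\le0$, of bounded total variation, and $\alpha$-Hölder continuous on $[0,1]$ for some $\alpha>0$. Assume $$\sup_{0\le t\le1}\Big|\int_0^1h(x-t)g(x)\,dx-\int_0^1g(x)\,dx\int_0^1h(x-t)\,dx\Big|>0.$$ Define $$T_{n,\mathrm{PC}}^2(h;\hat C)=\max_{1\le k<n}\sum_{p=1}^d\frac1{\hat\lambda_p}\frac1n\Big[\sum_{i=1}^nh\!\left(\tfrac{i-k}{n}\right)(\hat\eta_{i,p}-\bar{\hat\eta}_{n,p})\Big]^2.$$ Then $T_{n,\mathrm{PC}}(h;\hat C)\to\infty$ in probability.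
   Context: $\mathcal{H}=L^2(\mathcal{Z})$ is the real separable Hilbert space of square-integrable functions on a domain $\mathcal{Z}$ with a $\sigma$-finite measure $\nu$, with inner product $\langle f,g\rangle=\int fg\,d\nu$ and norm $\|\cdot\|$. The tensor product is $(v\otimes w)(h)=\langle v,h\rangle w$. Operator norms are used for operators. *)

theory Defs
  imports "HOL-Probability.Probability"
begin

definition real_gaussian :: "'w measure \<Rightarrow> ('w \<Rightarrow> real) \<Rightarrow> real \<Rightarrow> real \<Rightarrow> bool" where
  "real_gaussian M Y m v \<longleftrightarrow> 0 \<le> v \<and>
     (if v = 0 then Y \<in> borel_measurable M \<and> (AE \<omega> in M. Y \<omega> = m)
      else distributed M lborel Y (\<lambda>x. ennreal (normal_density m (sqrt v) x)))"

definition cadlag :: "(real \<Rightarrow> 'a::real_normed_vector) \<Rightarrow> bool" where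
  "cadlag x \<longleftrightarrow> (\<forall>t\<in>{0..<1}. (x \<longlongrightarrow> x t) (at_right t)) \<and>
                 (\<forall>t\<in>{0<..1}. \<exists>l. (x \<longlongrightarrow> l) (at_left t))"

definition time_change :: "(real \<Rightarrow> real) \<Rightarrow> bool" where
  "time_change la \<longleftrightarrow> strict_mono_on {0..1} la \<and> continuous_on {0..1} la \<and> la 0 = 0 \<and> la 1 = 1"

definition skorokhod_dist :: "(real \<Rightarrow> 'a::real_normed_vector) \<Rightarrow> (real \<Rightarrow> 'a) \<Rightarrow> real" where
  "skorokhod_dist x y = (INF la\<in>{la. time_change la}.
      max (SUP t\<in>{0..1}. \<bar>la t - t\<bar>) (SUP t\<in>{0..1}. norm (x (la t) - y t)))"

definition skorokhod_continuous :: "((real \<Rightarrow> 'a::real_normed_vector) \<Rightarrow> real) \<Rightarrow> bool" where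
  "skorokhod_continuous f \<longleftrightarrow> (\<forall>x. cadlag x \<longrightarrow> (\<forall>e>0. \<exists>\<delta>>0. \<forall>y. cadlag y \<longrightarrow>
       skorokhod_dist x y < \<delta> \<longrightarrow> \<bar>f y - f x\<bar> < e))"

definition weak_conv_D ::
  "'w measure \<Rightarrow> (nat \<Rightarrow> 'w \<Rightarrow> real \<Rightarrow> 'a::{real_normed_vector}) \<Rightarrow> 'b measure \<Rightarrow> ('b \<Rightarrow> real \<Rightarrow> 'a) \<Rightarrow> bool" where
  "weak_conv_D M S N W \<longleftrightarrow> (\<forall>f. (\<exists>B. \<forall>x. \<bar>f x\<bar> \<le> B) \<and> skorokhod_continuous f \<longrightarrow>
      (\<lambda>n. \<integral>\<omega>. f (S n \<omega>) \<partial>M) \<longlonglongrightarrow> (\<integral>\<omega>. f (W \<omega>) \<partial>N))"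

definition hilbert_BM :: "'b measure \<Rightarrow> ('b \<Rightarrow> real \<Rightarrow> 'a::real_inner) \<Rightarrow> ('a \<Rightarrow> 'a) \<Rightarrow> bool" where
  "hilbert_BM N W C \<longleftrightarrow> prob_space N \<and>
     (\<forall>t\<in>{0..1}. (\<lambda>\<omega>. W \<omega> t) \<in> borel_measurable N) \<and>
     (\<forall>\<omega>\<in>space N. continuous_on {0..1} (W \<omega>) \<and> W \<omega> 0 = 0) \<and>
     (\<forall>ts hs. length ts = length hs \<longrightarrow> set ts \<subseteq> {0..1} \<longrightarrow>
        real_gaussian N (\<lambda>\<omega>. \<Sum>j<length ts. inner (W \<omega> (ts!j)) (hs!j)) 0
          (\<Sum>j<length ts. \<Sum>l<length ts. min (ts!j) (ts!l) * inner (C (hs!j)) (hs!l)))"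

definition strictly_stationary :: "'w measure \<Rightarrow> (int \<Rightarrow> 'w \<Rightarrow> 'a::topological_space) \<Rightarrow> bool" where
  "strictly_stationary M e \<longleftrightarrow> (\<forall>I s. finite I \<longrightarrow>
     distr M (PiM I (\<lambda>_. borel)) (\<lambda>\<omega>. \<lambda>i\<in>I. e (i + s) \<omega>) =
     distr M (PiM I (\<lambda>_. borel)) (\<lambda>\<omega>. \<lambda>i\<in>I. e i \<omega>))"

text \<open>Y n = o_P(a n): for every e > 0, P(|Y n| > e a n) \<rightarrow> 0 (measurability assumed separately).\<close>
definition o_P :: "'w measure \<Rightarrow> (nat \<Rightarrow> 'w \<Rightarrow> real) \<Rightarrow> (nat \<Rightarrow> real) \<Rightarrow> bool" where
  "o_P M Y a \<longleftrightarrow> (\<forall>e>0. (\<lambda>n. measure M {\<omega>\<in>space M. \<bar>Y n \<omega>\<bar> > e * a n}) \<longlonglongrightarrow> 0)"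

definition diverges_in_prob :: "'w measure \<Rightarrow> (nat \<Rightarrow> 'w \<Rightarrow> real) \<Rightarrow> bool" where
  "diverges_in_prob M T \<longleftrightarrow> (\<forall>B. (\<lambda>n. measure M {\<omega>\<in>space M. T n \<omega> > B}) \<longlonglongrightarrow> 1)"

definition piecewise_continuous_on01 :: "(real \<Rightarrow> real) \<Rightarrow> bool" where
  "piecewise_continuous_on01 g \<longleftrightarrow> (\<exists>\<I>. finite \<I> \<and> \<Union>\<I> = {0..1} \<and>
     (\<forall>I\<in>\<I>. is_interval I \<and> (\<exists>x\<in>I. \<exists>y\<in>I. x < y) \<and> continuous_on I g))"

definition bounded_variation_on :: "(real \<Rightarrow> real) \<Rightarrow> real \<Rightarrow> real \<Rightarrow> bool" where
  "bounded_variation_on f a b \<longleftrightarrow> (\<exists>B. \<forall>xs. sorted xs \<longrightarrow> set xs \<subseteq> {a..b} \<longrightarrow>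
     (\<Sum>j<length xs - 1. \<bar>f (xs!(Suc j)) - f (xs!j)\<bar>) \<le> B)"

definition holder_on :: "real \<Rightarrow> real set \<Rightarrow> (real \<Rightarrow> real) \<Rightarrow> bool" where
  "holder_on \<alpha> S f \<longleftrightarrow> (\<exists>L. \<forall>x\<in>S. \<forall>y\<in>S. \<bar>f x - f y\<bar> \<le> L * \<bar>x - y\<bar> powr \<alpha>)"

text \<open>Autocovariance operator C_r h = E[(eps_0 \<otimes> eps_r) h] = E[<eps_0,h> eps_r].\<close>
definition cov_op :: "'w measure \<Rightarrow> (int \<Rightarrow> 'w \<Rightarrow> 'a::{real_inner,banach,second_countable_topology}) \<Rightarrow> int \<Rightarrow> 'a \<Rightarrow> 'a" where
  "cov_op M e r h = (\<integral>\<omega>. inner (e 0 \<omega>) h *\<^sub>R e r \<omega> \<partial>M)"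

definition lrv_op :: "'w measure \<Rightarrow> (int \<Rightarrow> 'w \<Rightarrow> 'a::{real_inner,banach,second_countable_topology}) \<Rightarrow> 'a \<Rightarrow> 'a" where
  "lrv_op M e h = (\<Sum>\<^sub>\<infinity>r. cov_op M e r h)"

definition real_cov :: "'w measure \<Rightarrow> ('w \<Rightarrow> real) \<Rightarrow> ('w \<Rightarrow> real) \<Rightarrow> real" where
  "real_cov M Y Z = (\<integral>\<omega>. Y \<omega> * Z \<omega> \<partial>M) - (\<integral>\<omega>. Y \<omega> \<partial>M) * (\<integral>\<omega>. Z \<omega> \<partial>M)"

text \<open>The statistic T_{n,PC}(h; C-hat) (the square root of the displayed T^2).\<close>
definition T_PC :: "(real \<Rightarrow> real) \<Rightarrow> nat \<Rightarrow> (nat \<Rightarrow> nat \<Rightarrow> real) \<Rightarrow> (nat \<Rightarrow> real) \<Rightarrow> nat \<Rightarrow> real" where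
  "T_PC h d eta lam n = sqrt (Max ((\<lambda>k. \<Sum>p=1..d. (1 / lam p) * (1 / real n) *
      (\<Sum>i=1..n. h ((real i - real k) / real n) * (eta i p - (\<Sum>j=1..n. eta j p) / real n))\<^sup>2) ` {1..<n}))"

end

theory Submission
  imports Defs
begin

(* The maximum defining T is bounded below by its term at a single lag k_n ~ t n, where t is a
   shift at which the limiting contrast
     G t = int h(x - t) g(x) dx - int g(x) dx * int h(x - t) dx
   does not vanish.  Riemann-sum arguments (Hoelder continuity of h, piecewise continuity of g)
   show that the drift coefficient a_n of this lag satisfies |a_n| >= kappa n.  The p-th weighted
   centred score equals a_n <Delta_n, vhat_p> + <E_n, vhat_p>, and summation by parts together with
   the bounded variation of h gives |E_n| <= 3 V max_j |eps_1 + ... + eps_j|, which is O_P(sqrt n)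
   by the invariance principle (A2), tested against a Skorokhod-continuous cutoff of the sup-norm.
   Since vhat_p is close to +-vt_p, sum_p <Delta_n, vhat_p>^2 >= c |Delta_n|^2 / 4, while every
   lamhat_p is at most |Chat| = o_P(n |Delta_n|^2).  Hence, with probability tending to one,
   T^2 >= c kappa^2 n |Delta_n|^2 / (16 |Chat|), which diverges. *)

section \<open>Riemann sums\<close>

lemma ceiling_grid_bounds:
  fixes x :: real
  assumes "n > 0"
  shows "x \<le> of_int \<lceil>real n * x\<rceil> / real n" and "of_int \<lceil>real n * x\<rceil> / real n < x + 1 / real n"
proof -
  have "real n * x \<le> of_int \<lceil>real n * x\<rceil>" "of_int \<lceil>real n * x\<rceil> < real n * x + 1"
    using ceiling_correct[of "real n * x"] by linarith+
  then show "x \<le> of_int \<lceil>real n * x\<rceil> / real n" "of_int \<lceil>real n * x\<rceil> / real n < x + 1 / real n"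
    using assms by (simp_all add: field_simps)
qed

lemma ceiling_grid_in_unit_interval:
  fixes x :: real
  assumes "n > 0" and "x \<in> {0..1}"
  shows "of_int \<lceil>real n * x\<rceil> / real n \<in> {0..1}"
proof -
  have "\<lceil>real n * x\<rceil> \<le> int n"
    using assms by (simp add: ceiling_le_iff mult_left_le)
  then show ?thesis
    using ceiling_grid_bounds(1)[OF assms(1), of x] assms by (auto simp: divide_le_eq_1)
qed

lemma has_integral_ceiling_step:
  fixes \<psi> :: "real \<Rightarrow> real"
  assumes n: "n > 0"
  shows "((\<lambda>x. \<psi> (of_int \<lceil>real n * x\<rceil> / real n)) has_integral
           (\<Sum>i=1..m. \<psi> (real i / real n)) / real n) {0..real m / real n}"
proof (induction m)
  case 0
  then show ?case by (simp add: has_integral_refl)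
next
  case (Suc m)
  let ?f = "\<lambda>x. \<psi> (of_int \<lceil>real n * x\<rceil> / real n)"
  let ?c = "\<psi> (real (Suc m) / real n)"
  have "((\<lambda>x. ?c) has_integral ?c / real n) {real m / real n..real (Suc m) / real n}"
    using has_integral_const_real[of ?c "real m / real n" "real (Suc m) / real n"] n
    by (simp add: divide_right_mono diff_divide_distrib[symmetric])
  then have step: "(?f has_integral ?c / real n) {real m / real n..real (Suc m) / real n}"
  proof (rule has_integral_spike_finite[rotated 2, where S="{real m / real n}"])
    fix x assume "x \<in> {real m / real n..real (Suc m) / real n} - {real m / real n}"
    then have "\<lceil>real n * x\<rceil> = int (Suc m)"
      using n by (subst ceiling_eq_iff) (auto simp: field_simps)
    then show "?f x = ?c" by simp
  qed simp
  have "(?f has_integral (\<Sum>i=1..m. \<psi> (real i / real n)) / real n + ?c / real n) {0..real (Suc m) / real n}"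
    by (rule has_integral_combine[OF _ _ Suc step]) (auto simp: divide_right_mono)
  then show ?case by (simp add: add_divide_distrib)
qed

lemma riemann_sum_tendsto_integral:
  fixes \<psi> :: "real \<Rightarrow> real"
  assumes bound: "\<And>x. x \<in> {0..1} \<Longrightarrow> \<bar>\<psi> x\<bar> \<le> B"
    and "finite E" and cont: "\<And>x. x \<in> {0<..<1} - E \<Longrightarrow> isCont \<psi> x"
  shows "(\<lambda>n. (\<Sum>i=1..n. \<psi> (real i / real n)) / real n) \<longlonglongrightarrow> integral {0..1} \<psi>"
proof -
  \<comment> \<open>\<open>\<psi> (r k x)\<close> is a step function whose integral is exactly the \<open>Suc k\<close>-th Riemann sum\<close>
  define r where "r k x = of_int \<lceil>real (Suc k) * x\<rceil> / real (Suc k)" for k x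
  define f where "f k x = (if x \<in> E \<union> {0, 1} then \<psi> x else \<psi> (r k x))" for k x
  have f_int: "(f k has_integral (\<Sum>i=1..Suc k. \<psi> (real i / real (Suc k))) / real (Suc k)) {0..1}" for k
  proof -
    have "((\<lambda>x. \<psi> (r k x)) has_integral (\<Sum>i=1..Suc k. \<psi> (real i / real (Suc k))) / real (Suc k)) {0..1}"
      using has_integral_ceiling_step[of "Suc k" \<psi> "Suc k"] by (simp add: r_def)
    then show ?thesis
      by (rule has_integral_spike_finite[rotated 2, where S="E \<union> {0, 1}"]) (auto simp: f_def \<open>finite E\<close>)
  qed
  have "(\<lambda>k. integral {0..1} (f k)) \<longlonglongrightarrow> integral {0..1} \<psi>"
  proof (rule dominated_convergence[where h="\<lambda>_. B"])
    show "f k integrable_on {0..1}" for k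
      using f_int by blast
    show "norm (f k x) \<le> B" if "x \<in> {0..1}" for k x
      using that bound ceiling_grid_in_unit_interval[of "Suc k" x] by (simp add: f_def r_def)
    show "(\<lambda>k. f k x) \<longlonglongrightarrow> \<psi> x" if "x \<in> {0..1}" for x
    proof (cases "x \<in> E \<union> {0, 1}")
      case False
      have "(\<lambda>k. r k x) \<longlonglongrightarrow> x"
      proof (rule tendsto_sandwich[of "\<lambda>k. x" _ _ "\<lambda>k. x + 1 / real (Suc k)"])
        show "\<forall>\<^sub>F k in sequentially. x \<le> r k x" "\<forall>\<^sub>F k in sequentially. r k x \<le> x + 1 / real (Suc k)"
          using ceiling_grid_bounds[of "Suc k" x for k] by (auto simp: r_def less_imp_le)
        show "(\<lambda>k. x + 1 / real (Suc k)) \<longlonglongrightarrow> x"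
          using tendsto_add[OF tendsto_const LIMSEQ_Suc[OF lim_const_over_n[of 1]]] by simp
      qed simp
      moreover have "isCont \<psi> x"
        using False that by (intro cont) auto
      ultimately show ?thesis
        using False by (simp add: f_def isCont_tendsto_compose[of x \<psi>])
    qed (simp add: f_def)
  qed auto
  then have "(\<lambda>k. (\<Sum>i=1..Suc k. \<psi> (real i / real (Suc k))) / real (Suc k)) \<longlonglongrightarrow> integral {0..1} \<psi>"
    using f_int[THEN integral_unique] by simp
  then show ?thesis
    by (rule LIMSEQ_imp_Suc)
qed

lemma holder_on_extend_by_zero:
  fixes h :: "real \<Rightarrow> real"
  assumes holder: "holder_on \<alpha> {0..b} h" and "\<alpha> > 0" and "0 \<le> b"
    and zero: "\<And>x. x \<in> {a..0} \<Longrightarrow> h x = 0"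
  shows "holder_on \<alpha> {a..b} h"
proof -
  obtain L where L: "\<And>x y. x \<in> {0..b} \<Longrightarrow> y \<in> {0..b} \<Longrightarrow> \<bar>h x - h y\<bar> \<le> L * \<bar>x - y\<bar> powr \<alpha>"
    using holder unfolding holder_on_def by blast
  define L' where "L' = max L 0"
  have L': "\<bar>h x - h y\<bar> \<le> L' * \<bar>x - y\<bar> powr \<alpha>" if "x \<in> {0..b}" "y \<in> {0..b}" for x y
    using L[OF that] by (smt (verit, best) L'_def mult_right_mono powr_ge_zero)
  have mono: "L' * \<bar>u\<bar> powr \<alpha> \<le> L' * \<bar>v\<bar> powr \<alpha>" if "\<bar>u\<bar> \<le> \<bar>v\<bar>" for u v :: real
    using that \<open>\<alpha> > 0\<close> by (intro mult_left_mono powr_mono2) (auto simp: L'_def)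
  have "\<bar>h x - h y\<bar> \<le> L' * \<bar>x - y\<bar> powr \<alpha>" if "x \<in> {a..b}" "y \<in> {a..b}" for x y
  proof -
    have clip: "h z = h (max z 0)" "max z 0 \<in> {0..b}" if "z \<in> {a..b}" for z
      using that zero[of z] zero[of 0] \<open>0 \<le> b\<close> by (auto simp: max_def)
    have "\<bar>h x - h y\<bar> \<le> L' * \<bar>max x 0 - max y 0\<bar> powr \<alpha>"
      using L'[OF clip(2) clip(2)] that by (simp add: clip(1)[OF that(1)] clip(1)[OF that(2)])
    also have "\<dots> \<le> L' * \<bar>x - y\<bar> powr \<alpha>"
      by (intro mono) (auto simp: max_def)
    finally show ?thesis .
  qed
  then show ?thesis
    unfolding holder_on_def by blast
qed

lemma holder_on_isCont:
  fixes h :: "real \<Rightarrow> real"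
  assumes "holder_on \<alpha> S h" and "\<alpha> > 0" and x: "x \<in> interior S"
  shows "isCont h x"
proof -
  obtain L where L: "\<And>y z. y \<in> S \<Longrightarrow> z \<in> S \<Longrightarrow> \<bar>h y - h z\<bar> \<le> L * \<bar>y - z\<bar> powr \<alpha>"
    using assms(1) unfolding holder_on_def by blast
  have "((\<lambda>y. h y - h x) \<longlongrightarrow> 0) (at x)"
  proof (rule Lim_null_comparison)
    show "\<forall>\<^sub>F y in at x. norm (h y - h x) \<le> L * \<bar>y - x\<bar> powr \<alpha>"
      using eventually_at_in_open'[OF open_interior x] by eventually_elim (use L x interior_subset in auto)
    have "((\<lambda>y. \<bar>y - x\<bar>) \<longlongrightarrow> 0) (at x)"
      by (intro tendsto_rabs_zero LIM_zero tendsto_ident_at)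
    then show "((\<lambda>y. L * \<bar>y - x\<bar> powr \<alpha>) \<longlongrightarrow> 0) (at x)"
      using \<open>\<alpha> > 0\<close> by (intro tendsto_mult_right_zero tendsto_zero_powrI) auto
  qed
  then show ?thesis
    by (simp add: isCont_def LIM_zero_cancel)
qed

lemma bounded_variation_on_bound:
  fixes f :: "real \<Rightarrow> real"
  assumes "bounded_variation_on f a b" and "f a = 0"
  obtains V where "\<And>x. x \<in> {a..b} \<Longrightarrow> \<bar>f x\<bar> \<le> V"
    and "\<And>xs. sorted xs \<Longrightarrow> set xs \<subseteq> {a..b} \<Longrightarrow> (\<Sum>j<length xs - 1. \<bar>f (xs!(Suc j)) - f (xs!j)\<bar>) \<le> V"
proof -
  obtain V where V: "\<And>xs. sorted xs \<Longrightarrow> set xs \<subseteq> {a..b} \<Longrightarrow> (\<Sum>j<length xs - 1. \<bar>f (xs!(Suc j)) - f (xs!j)\<bar>) \<le> V"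
    using assms(1) unfolding bounded_variation_on_def by blast
  have "\<bar>f x\<bar> \<le> V" if "x \<in> {a..b}" for x
    using V[of "[a, x]"] that \<open>f a = 0\<close> by simp
  then show thesis
    using V by (rule that)
qed

lemma piecewise_continuous_on01_isCont:
  assumes "piecewise_continuous_on01 g"
  obtains E where "finite E" and "\<And>x. x \<in> {0<..<1} - E \<Longrightarrow> isCont g x"
proof -
  obtain \<I> where fin: "finite \<I>" and U: "\<Union>\<I> = {0..1}"
    and I: "\<And>I. I \<in> \<I> \<Longrightarrow> is_interval I \<and> continuous_on I g"
    using assms unfolding piecewise_continuous_on01_def by blast
  have "finite (Inf ` \<I> \<union> Sup ` \<I>)"
    using fin by simp
  moreover have "isCont g x" if x: "x \<in> {0<..<1} - (Inf ` \<I> \<union> Sup ` \<I>)" for x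
  proof -
    obtain I where I1: "I \<in> \<I>" "x \<in> I"
      using x U by (metis DiffD1 Union_iff greaterThanLessThan_subseteq_atLeastAtMost_iff order.refl subsetD)
    have "I \<subseteq> {0..1}"
      using U I1 by auto
    then have bdd: "bdd_below I" "bdd_above I"
      by (meson bdd_below_Icc bdd_below_mono, meson bdd_above_Icc bdd_above_mono)
    have "Inf I \<le> x" "x \<le> Sup I" "Inf I \<noteq> x" "Sup I \<noteq> x"
      using x I1 bdd by (auto intro: cInf_lower cSup_upper)
    then have "Inf I < x" "x < Sup I"
      by auto
    then obtain a b where "a \<in> I" "a < x" "b \<in> I" "x < b"
      using I1 bdd cInf_less_iff[of I x] less_cSup_iff[of I x] by blast
    then have "{a<..<b} \<subseteq> I"
      using I[OF I1(1)] unfolding is_interval_1 by (meson greaterThanLessThan_iff less_imp_le subsetI)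
    then have "x \<in> interior I"
      using \<open>a < x\<close> \<open>x < b\<close> by (meson greaterThanLessThan_iff interiorI open_greaterThanLessThan)
    then show ?thesis
      using I[OF I1(1)] continuous_on_interior by blast
  qed
  ultimately show thesis
    by (rule that)
qed

lemma shifted_riemann_sum_diff_le:
  fixes h \<phi> :: "real \<Rightarrow> real"
  assumes L: "\<And>x y. x \<in> {-1..1} \<Longrightarrow> y \<in> {-1..1} \<Longrightarrow> \<bar>h x - h y\<bar> \<le> L * \<bar>x - y\<bar> powr \<alpha>"
    and \<phi>: "\<And>x. x \<in> {0..1} \<Longrightarrow> \<bar>\<phi> x\<bar> \<le> B"
    and "k \<le> n" and t: "t \<in> {0..1}" and n: "n > 0"
  shows "\<bar>(\<Sum>i=1..n. h ((real i - real k) / real n) * \<phi> (real i / real n)) / real n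
          - (\<Sum>i=1..n. h (real i / real n - t) * \<phi> (real i / real n)) / real n\<bar>
         \<le> L * \<bar>real k / real n - t\<bar> powr \<alpha> * B"
proof -
  let ?C = "L * \<bar>real k / real n - t\<bar> powr \<alpha> * B"
  have each: "\<bar>h ((real i - real k) / real n) * \<phi> (real i / real n) - h (real i / real n - t) * \<phi> (real i / real n)\<bar> \<le> ?C"
    if i: "i \<in> {1..n}" for i
  proof -
    have x: "real i / real n \<in> {0..1}"
      using i n by auto
    then have "real i / real n - t \<in> {-1..1}"
      using t unfolding atLeastAtMost_iff by linarith
    moreover have "(real i - real k) / real n \<in> {-1..1}"
      using i n \<open>k \<le> n\<close> by (auto simp: field_simps)
    moreover have "\<bar>(real i - real k) / real n - (real i / real n - t)\<bar> = \<bar>real k / real n - t\<bar>"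
      by (simp add: diff_divide_distrib)
    ultimately have "\<bar>h ((real i - real k) / real n) - h (real i / real n - t)\<bar> \<le> L * \<bar>real k / real n - t\<bar> powr \<alpha>"
      using L by metis
    then have "\<bar>h ((real i - real k) / real n) - h (real i / real n - t)\<bar> * \<bar>\<phi> (real i / real n)\<bar> \<le> ?C"
      using \<phi>[OF x] by (intro mult_mono') auto
    then show ?thesis
      by (simp add: abs_mult left_diff_distrib[symmetric])
  qed
  have "\<bar>(\<Sum>i=1..n. h ((real i - real k) / real n) * \<phi> (real i / real n))
          - (\<Sum>i=1..n. h (real i / real n - t) * \<phi> (real i / real n))\<bar> \<le> (\<Sum>i=1..n. ?C)"
    unfolding sum_subtractf[symmetric] by (rule order_trans[OF sum_abs sum_mono[OF each]])
  then show ?thesis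
    using n by (simp add: diff_divide_distrib[symmetric] abs_divide divide_le_eq mult.commute)
qed

lemma shifted_riemann_sum_tendsto:
  fixes h \<phi> :: "real \<Rightarrow> real" and k :: "nat \<Rightarrow> nat"
  assumes holder: "holder_on \<alpha> {-1..1} h" and "\<alpha> > 0" and hV: "\<And>x. x \<in> {-1..1} \<Longrightarrow> \<bar>h x\<bar> \<le> V"
    and \<phi>: "\<And>x. x \<in> {0..1} \<Longrightarrow> \<bar>\<phi> x\<bar> \<le> B" and "finite E" and cont: "\<And>x. x \<in> {0<..<1} - E \<Longrightarrow> isCont \<phi> x"
    and k: "(\<lambda>n. real (k n) / real n) \<longlonglongrightarrow> t" and k_le: "\<forall>\<^sub>F n in sequentially. k n \<le> n"
    and t: "t \<in> {0..1}"
  shows "(\<lambda>n. (\<Sum>i=1..n. h ((real i - real (k n)) / real n) * \<phi> (real i / real n)) / real n)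
           \<longlonglongrightarrow> integral {0..1} (\<lambda>x. h (x - t) * \<phi> x)"
proof -
  obtain L where L: "\<And>x y. x \<in> {-1..1} \<Longrightarrow> y \<in> {-1..1} \<Longrightarrow> \<bar>h x - h y\<bar> \<le> L * \<bar>x - y\<bar> powr \<alpha>"
    using holder unfolding holder_on_def by blast
  have "(\<lambda>n. (\<Sum>i=1..n. h (real i / real n - t) * \<phi> (real i / real n)) / real n)
           \<longlonglongrightarrow> integral {0..1} (\<lambda>x. h (x - t) * \<phi> x)"
  proof (rule riemann_sum_tendsto_integral)
    show "\<bar>h (x - t) * \<phi> x\<bar> \<le> V * B" if "x \<in> {0..1}" for x
    proof -
      have "x - t \<in> {-1..1}"
        using that t unfolding atLeastAtMost_iff by linarith
      then show ?thesis
        unfolding abs_mult using hV \<phi>[OF that] by (intro mult_mono') auto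
    qed
    show "isCont (\<lambda>x. h (x - t) * \<phi> x) x" if "x \<in> {0<..<1} - E" for x
    proof -
      have "isCont h (x - t)"
        using that t by (intro holder_on_isCont[OF holder \<open>\<alpha> > 0\<close>]) auto
      then have "isCont (\<lambda>x. h (x - t)) x"
        using isCont_o2[where f="\<lambda>x. x - t" and a=x and g=h] by simp
      then show ?thesis
        using cont[OF that] by (rule isCont_mult)
    qed
  qed (rule \<open>finite E\<close>)
  moreover have "(\<lambda>n. (\<Sum>i=1..n. h ((real i - real (k n)) / real n) * \<phi> (real i / real n)) / real n
                   - (\<Sum>i=1..n. h (real i / real n - t) * \<phi> (real i / real n)) / real n) \<longlonglongrightarrow> 0"
  proof (rule Lim_null_comparison)
    show "\<forall>\<^sub>F n in sequentially. norm ((\<Sum>i=1..n. h ((real i - real (k n)) / real n) * \<phi> (real i / real n)) / real n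
                   - (\<Sum>i=1..n. h (real i / real n - t) * \<phi> (real i / real n)) / real n)
            \<le> L * \<bar>real (k n) / real n - t\<bar> powr \<alpha> * B"
      using k_le eventually_gt_at_top[of 0]
    proof eventually_elim
      case (elim n)
      show ?case
        unfolding real_norm_def by (rule shifted_riemann_sum_diff_le[OF L \<phi> elim(1) t elim(2)])
    qed
    have "(\<lambda>n. \<bar>real (k n) / real n - t\<bar>) \<longlonglongrightarrow> 0"
      using k by (intro tendsto_rabs_zero LIM_zero)
    then show "(\<lambda>n. L * \<bar>real (k n) / real n - t\<bar> powr \<alpha> * B) \<longlonglongrightarrow> 0"
      using \<open>\<alpha> > 0\<close> by (intro tendsto_mult_left_zero tendsto_mult_right_zero tendsto_zero_powrI) auto
  qed
  ultimately show ?thesis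
    by (rule Lim_transform)
qed

lemma centered_kernel_sum_tendsto:
  fixes h g :: "real \<Rightarrow> real" and k :: "nat \<Rightarrow> nat"
  assumes holder: "holder_on \<alpha> {-1..1} h" and "\<alpha> > 0" and hV: "\<And>x. x \<in> {-1..1} \<Longrightarrow> \<bar>h x\<bar> \<le> V"
    and g: "\<And>x. x \<in> {0..1} \<Longrightarrow> \<bar>g x\<bar> \<le> B" and "finite E" and cont: "\<And>x. x \<in> {0<..<1} - E \<Longrightarrow> isCont g x"
    and k: "(\<lambda>n. real (k n) / real n) \<longlonglongrightarrow> t" and k_le: "\<forall>\<^sub>F n in sequentially. k n \<le> n"
    and t: "t \<in> {0..1}"
  shows "(\<lambda>n. (\<Sum>i=1..n. h ((real i - real (k n)) / real n) *
                 (g (real i / real n) - (\<Sum>j=1..n. g (real j / real n)) / real n)) / real n)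
           \<longlonglongrightarrow> integral {0..1} (\<lambda>x. h (x - t) * g x) - integral {0..1} g * integral {0..1} (\<lambda>x. h (x - t))"
proof -
  let ?hk = "\<lambda>n i. h ((real i - real (k n)) / real n)"
  have A: "(\<lambda>n. (\<Sum>i=1..n. ?hk n i * g (real i / real n)) / real n) \<longlonglongrightarrow> integral {0..1} (\<lambda>x. h (x - t) * g x)"
    by (rule shifted_riemann_sum_tendsto[OF holder \<open>\<alpha> > 0\<close> hV g \<open>finite E\<close> cont k k_le t])
  have H: "(\<lambda>n. (\<Sum>i=1..n. ?hk n i * 1) / real n) \<longlonglongrightarrow> integral {0..1} (\<lambda>x. h (x - t) * 1)"
    by (rule shifted_riemann_sum_tendsto[OF holder \<open>\<alpha> > 0\<close> hV, where B=1 and E="{}"]) (use k k_le t in auto)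
  have G: "(\<lambda>n. (\<Sum>j=1..n. g (real j / real n)) / real n) \<longlonglongrightarrow> integral {0..1} g"
    by (rule riemann_sum_tendsto_integral[OF g \<open>finite E\<close> cont])
  have "(\<lambda>n. (\<Sum>i=1..n. ?hk n i * g (real i / real n)) / real n
            - (\<Sum>j=1..n. g (real j / real n)) / real n * ((\<Sum>i=1..n. ?hk n i * 1) / real n))
           \<longlonglongrightarrow> integral {0..1} (\<lambda>x. h (x - t) * g x) - integral {0..1} g * integral {0..1} (\<lambda>x. h (x - t))"
    using tendsto_diff[OF A tendsto_mult[OF G H]] by simp
  moreover have "(\<Sum>i=1..n. ?hk n i * (g (real i / real n) - c)) / real n
      = (\<Sum>i=1..n. ?hk n i * g (real i / real n)) / real n - c * ((\<Sum>i=1..n. ?hk n i * 1) / real n)" for n c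
  proof -
    have "(\<Sum>i=1..n. ?hk n i * (g (real i / real n) - c))
        = (\<Sum>i=1..n. ?hk n i * g (real i / real n)) - c * (\<Sum>i=1..n. ?hk n i * 1)"
      by (simp add: right_diff_distrib sum_subtractf sum_distrib_left algebra_simps)
    then show ?thesis
      by (simp add: diff_divide_distrib)
  qed
  ultimately show ?thesis
    by simp
qed

section \<open>The drift at a well-chosen lag\<close>

lemma grid_index_tendsto:
  fixes t :: real
  assumes "t \<ge> 0"
  shows "(\<lambda>n. real (max 1 (nat \<lfloor>t * real n\<rfloor>)) / real n) \<longlonglongrightarrow> t"
proof (rule tendsto_sandwich[of "\<lambda>n. t - 1 / real n" _ _ "\<lambda>n. t + 1 / real n"])
  let ?k = "\<lambda>n. real (max 1 (nat \<lfloor>t * real n\<rfloor>))"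
  have k: "t * real n - 1 \<le> ?k n" "?k n \<le> t * real n + 1" for n
    using assms by (auto simp: max_def) linarith+
  show "\<forall>\<^sub>F n in sequentially. t - 1 / real n \<le> ?k n / real n"
    using eventually_gt_at_top[of 0]
  proof eventually_elim
    case (elim n)
    then have "t - 1 / real n = (t * real n - 1) / real n"
      by (simp add: field_simps)
    then show ?case
      using k(1)[of n] by (simp add: divide_right_mono)
  qed
  show "\<forall>\<^sub>F n in sequentially. ?k n / real n \<le> t + 1 / real n"
    using eventually_gt_at_top[of 0]
  proof eventually_elim
    case (elim n)
    then have "t + 1 / real n = (t * real n + 1) / real n"
      by (simp add: field_simps)
    then show ?case
      using k(2)[of n] by (simp add: divide_right_mono)
  qed
  show "(\<lambda>n. t - 1 / real n) \<longlonglongrightarrow> t" "(\<lambda>n. t + 1 / real n) \<longlonglongrightarrow> t"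
    using tendsto_diff[OF tendsto_const lim_const_over_n[of 1]] tendsto_add[OF tendsto_const lim_const_over_n[of 1]]
    by simp_all
qed

lemma shift_with_nonzero_contrast:
  fixes g h :: "real \<Rightarrow> real"
  assumes h_zero: "\<And>x. x \<in> {-1..0} \<Longrightarrow> h x = 0"
    and hg: "(SUP t\<in>{0..1}. \<bar>integral {0..1} (\<lambda>x. h (x - t) * g x)
               - integral {0..1} g * integral {0..1} (\<lambda>x. h (x - t))\<bar>) > 0"
  obtains t where "t \<in> {0..<1}"
    and "integral {0..1} (\<lambda>x. h (x - t) * g x) - integral {0..1} g * integral {0..1} (\<lambda>x. h (x - t)) \<noteq> 0"
proof -
  define G where "G t = integral {0..1} (\<lambda>x. h (x - t) * g x) - integral {0..1} g * integral {0..1} (\<lambda>x. h (x - t))" for t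
  obtain t where t: "t \<in> {0..1}" and Gt: "G t \<noteq> 0"
  proof (rule ccontr)
    assume "\<not> thesis"
    then have "(SUP t\<in>{0..1}. \<bar>G t\<bar>) = (SUP t\<in>{0..1::real}. 0)"
      using that by (intro SUP_cong) auto
    then show False
      using hg by (simp add: G_def)
  qed
  have h1: "h (x - 1) = 0" if "x \<in> {0..1}" for x
    using that by (intro h_zero) auto
  have "integral {0..1} (\<lambda>x. h (x - 1) * g x) = integral {0..1} (\<lambda>x::real. 0)"
    by (rule Henstock_Kurzweil_Integration.integral_cong) (simp add: h1)
  moreover have "integral {0..1} (\<lambda>x. h (x - 1)) = integral {0..1} (\<lambda>x::real. 0)"
    by (rule Henstock_Kurzweil_Integration.integral_cong) (simp add: h1)
  ultimately have "G 1 = 0"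
    by (simp add: G_def)
  with Gt t have "t \<in> {0..<1}"
    by (metis atLeastAtMost_iff atLeastLessThan_iff order_less_le)
  then show thesis
    using Gt that unfolding G_def by blast
qed

lemma kernel_sum_lower_bound:
  fixes g h :: "real \<Rightarrow> real"
  assumes g_bdd: "bounded (g ` {0..1})" and g_pc: "piecewise_continuous_on01 g"
    and h_zero: "\<And>x. x \<in> {-1..0} \<Longrightarrow> h x = 0" and h_bv: "bounded_variation_on h (-1) 1"
    and "\<alpha> > 0" and h_holder: "holder_on \<alpha> {0..1} h"
    and hg: "(SUP t\<in>{0..1}. \<bar>integral {0..1} (\<lambda>x. h (x - t) * g x)
               - integral {0..1} g * integral {0..1} (\<lambda>x. h (x - t))\<bar>) > 0"
  obtains \<kappa> k where "\<kappa> > 0" and "\<forall>\<^sub>F n in sequentially. 1 \<le> k n \<and> k n < n \<and>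
     \<kappa> * real n \<le> \<bar>\<Sum>i=1..n. h ((real i - real (k n)) / real n) *
        (g (real i / real n) - (\<Sum>j=1..n. g (real j / real n)) / real n)\<bar>"
proof -
  define G where "G t = integral {0..1} (\<lambda>x. h (x - t) * g x) - integral {0..1} g * integral {0..1} (\<lambda>x. h (x - t))" for t
  have holder: "holder_on \<alpha> {-1..1} h"
    using holder_on_extend_by_zero[OF h_holder \<open>\<alpha> > 0\<close> _ h_zero] by simp
  obtain V where hV: "\<And>x. x \<in> {-1..1} \<Longrightarrow> \<bar>h x\<bar> \<le> V"
    by (rule bounded_variation_on_bound[OF h_bv h_zero[of "-1"]]) auto
  obtain B where g: "\<And>x. x \<in> {0..1} \<Longrightarrow> \<bar>g x\<bar> \<le> B"
    using g_bdd unfolding bounded_iff by (metis image_eqI real_norm_def)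
  obtain E where "finite E" and cont: "\<And>x. x \<in> {0<..<1} - E \<Longrightarrow> isCont g x"
    using piecewise_continuous_on01_isCont[OF g_pc] by blast
  obtain t where t: "t \<in> {0..<1}" and Gt: "G t \<noteq> 0"
    using shift_with_nonzero_contrast[OF h_zero hg] unfolding G_def by blast
  define k where "k n = max 1 (nat \<lfloor>t * real n\<rfloor>)" for n
  have k: "(\<lambda>n. real (k n) / real n) \<longlonglongrightarrow> t"
    unfolding k_def using t by (intro grid_index_tendsto) auto
  have "\<forall>\<^sub>F n in sequentially. real (k n) / real n < 1"
    using t by (intro order_tendstoD(2)[OF k]) simp
  then have k_lt: "\<forall>\<^sub>F n in sequentially. k n < n"
    using eventually_gt_at_top[of 0] by eventually_elim (simp add: divide_less_eq)
  have lim: "(\<lambda>n. (\<Sum>i=1..n. h ((real i - real (k n)) / real n) *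
                 (g (real i / real n) - (\<Sum>j=1..n. g (real j / real n)) / real n)) / real n) \<longlonglongrightarrow> G t"
    unfolding G_def
    by (rule centered_kernel_sum_tendsto[OF holder \<open>\<alpha> > 0\<close> hV g \<open>finite E\<close> cont k])
      (use k_lt t in \<open>auto elim: eventually_mono\<close>)
  have "\<forall>\<^sub>F n in sequentially. \<bar>G t\<bar> / 2 < \<bar>(\<Sum>i=1..n. h ((real i - real (k n)) / real n) *
                 (g (real i / real n) - (\<Sum>j=1..n. g (real j / real n)) / real n)) / real n\<bar>"
    using Gt by (intro order_tendstoD(1)[OF tendsto_rabs[OF lim]]) simp
  then have "\<forall>\<^sub>F n in sequentially. 1 \<le> k n \<and> k n < n \<and> \<bar>G t\<bar> / 2 * real n \<le> \<bar>\<Sum>i=1..n. h ((real i - real (k n)) / real n) *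
        (g (real i / real n) - (\<Sum>j=1..n. g (real j / real n)) / real n)\<bar>"
    using k_lt eventually_gt_at_top[of 0]
    by eventually_elim (auto simp: k_def abs_divide less_divide_eq less_imp_le)
  then show thesis
    using Gt by (intro that[of "\<bar>G t\<bar> / 2"]) auto
qed

section \<open>Maximal partial sums under the invariance principle\<close>

definition capped_sup_norm :: "real \<Rightarrow> (real \<Rightarrow> 'a::real_normed_vector) \<Rightarrow> real" where
  "capped_sup_norm K x = (SUP t\<in>{0..1}. min K (norm (x t)))"

text \<open>A bounded, Skorokhod-continuous substitute for the indicator of paths leaving the ball of
  radius \<open>K\<close>: it is \<open>1\<close> if \<open>\<parallel>x t\<parallel> \<ge> K\<close> somewhere and \<open>0\<close> if \<open>\<parallel>x t\<parallel> \<le> K - 1\<close> everywhere.\<close>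
definition sup_norm_cutoff :: "real \<Rightarrow> (real \<Rightarrow> 'a::real_normed_vector) \<Rightarrow> real" where
  "sup_norm_cutoff K x = max 0 (capped_sup_norm K x - K + 1)"

lemma capped_sup_norm_upper: "t \<in> {0..1} \<Longrightarrow> min K (norm (x t)) \<le> capped_sup_norm K x"
  unfolding capped_sup_norm_def by (rule cSUP_upper) (auto intro: bdd_aboveI2[where M=K])

lemma capped_sup_norm_least: "(\<And>t. t \<in> {0..1} \<Longrightarrow> min K (norm (x t)) \<le> c) \<Longrightarrow> capped_sup_norm K x \<le> c"
  unfolding capped_sup_norm_def by (rule cSUP_least) auto

lemma sup_norm_cutoff_bounds: "0 \<le> sup_norm_cutoff K x" "sup_norm_cutoff K x \<le> 1"
  using capped_sup_norm_least[of K x K] by (auto simp: sup_norm_cutoff_def)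

lemma sup_norm_cutoff_eq_1:
  assumes "t \<in> {0..1}" and "K \<le> norm (x t)"
  shows "sup_norm_cutoff K x = 1"
  using capped_sup_norm_upper[OF assms(1), of K x] capped_sup_norm_least[of K x K] assms(2)
  by (simp add: sup_norm_cutoff_def)

lemma sup_norm_cutoff_eq_0:
  assumes "\<And>t. t \<in> {0..1} \<Longrightarrow> norm (x t) \<le> K - 1"
  shows "sup_norm_cutoff K x = 0"
  using capped_sup_norm_least[of K x "K - 1"] assms by (force simp: sup_norm_cutoff_def)

lemma compact_locally_bounded:
  fixes f :: "'a::topological_space \<Rightarrow> real"
  assumes "compact S" and "\<And>t. t \<in> S \<Longrightarrow> \<exists>b. \<forall>\<^sub>F s in nhds t. s \<in> S \<longrightarrow> f s \<le> b"
  obtains B where "\<And>s. s \<in> S \<Longrightarrow> f s \<le> B"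
proof -
  obtain b U where U: "\<And>t. t \<in> S \<Longrightarrow> open (U t) \<and> t \<in> U t \<and> (\<forall>s\<in>U t. s \<in> S \<longrightarrow> f s \<le> b t)"
    using assms(2) unfolding eventually_nhds by metis
  obtain C where C: "C \<subseteq> S" "finite C" "S \<subseteq> (\<Union>t\<in>C. U t)"
    using compactE_image[OF assms(1), of S U] U by blast
  show thesis
  proof (rule that)
    fix s assume "s \<in> S"
    then obtain t where "t \<in> C" "s \<in> U t"
      using C(3) by blast
    then have "f s \<le> b t"
      using U C(1) \<open>s \<in> S\<close> by blast
    also have "\<dots> \<le> Max (b ` C)"
      using C(2) \<open>t \<in> C\<close> by simp
    finally show "f s \<le> Max (b ` C)" .
  qed
qed

lemma cadlag_bounded:
  fixes x :: "real \<Rightarrow> 'a::real_normed_vector"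
  assumes "cadlag x"
  obtains B where "\<And>t. t \<in> {0..1} \<Longrightarrow> norm (x t) \<le> B"
proof (rule compact_locally_bounded[of "{0..1}" "\<lambda>t. norm (x t)"])
  fix t :: real assume t: "t \<in> {0..1}"
  have near: "norm u \<le> norm v + 1" if "dist u v < 1" for u v :: 'a
    using that norm_triangle_ineq2[of u v] by (simp add: dist_norm)
  have right: "\<forall>\<^sub>F s in at_right t. s \<in> {0..1} \<longrightarrow> norm (x s) \<le> norm (x t) + 1"
  proof (cases "t < 1")
    case True
    then have "(x \<longlongrightarrow> x t) (at_right t)"
      using assms t unfolding cadlag_def by auto
    from tendstoD[OF this zero_less_one] show ?thesis
      by eventually_elim (simp add: near)
  next
    case False
    then show ?thesis
      using t eventually_at_right_less[of t] by (auto elim: eventually_mono)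
  qed
  obtain c where left: "\<forall>\<^sub>F s in at_left t. s \<in> {0..1} \<longrightarrow> norm (x s) \<le> c"
  proof (cases "0 < t")
    case True
    then obtain l where "(x \<longlongrightarrow> l) (at_left t)"
      using assms t unfolding cadlag_def by (meson greaterThanAtMost_iff atLeastAtMost_iff)
    from tendstoD[OF this zero_less_one] have "\<forall>\<^sub>F s in at_left t. norm (x s) \<le> norm l + 1"
      by eventually_elim (simp add: near)
    then show thesis
      by (rule that[OF eventually_mono]) auto
  next
    case False
    then have "\<forall>\<^sub>F s in at_left t. s \<notin> {0..1}"
      using t by (intro eventually_at_leftI[of "t - 1"]) auto
    then show thesis
      by (rule that[OF eventually_mono]) auto
  qed
  show "\<exists>b. \<forall>\<^sub>F s in nhds t. s \<in> {0..1} \<longrightarrow> norm (x s) \<le> b"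
    using left right
    by (intro exI[of _ "max (norm (x t) + 1) c"])
      (auto simp: eventually_nhds_conv_at eventually_at_split elim: eventually_mono)
qed auto

lemma time_change_in_unit_interval:
  assumes "time_change la" and "t \<in> {0..1}"
  shows "la t \<in> {0..1}"
proof -
  have mono: "strict_mono_on {0..1} la"
    using assms(1) unfolding time_change_def by simp
  have "la 0 \<le> la t" "la t \<le> la 1"
    using assms(2) by (auto intro!: strict_mono_on_leD[OF mono])
  then show ?thesis
    using assms(1) unfolding time_change_def by simp
qed

lemma time_change_onto:
  assumes "time_change la" and "s \<in> {0..1}"
  obtains t where "t \<in> {0..1}" and "la t = s"
proof -
  have "\<exists>t. 0 \<le> t \<and> t \<le> 1 \<and> la t = s"
    using assms unfolding time_change_def by (intro IVT') auto
  then show thesis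
    using that by auto
qed

lemma min_norm_le_add_norm_diff:
  fixes u v :: "'a::real_normed_vector"
  shows "min K (norm u) \<le> min K (norm v) + norm (u - v)"
  using norm_triangle_ineq2[of u v] norm_ge_zero[of "u - v"] by linarith

lemma capped_sup_norm_time_change_diff:
  assumes la: "time_change la" and close: "\<And>t. t \<in> {0..1} \<Longrightarrow> norm (x (la t) - y t) \<le> e"
  shows "\<bar>capped_sup_norm K x - capped_sup_norm K y\<bar> \<le> e"
proof -
  have "capped_sup_norm K y \<le> capped_sup_norm K x + e"
  proof (rule capped_sup_norm_least)
    fix t :: real assume t: "t \<in> {0..1}"
    have "min K (norm (y t)) \<le> min K (norm (x (la t))) + norm (y t - x (la t))"
      by (rule min_norm_le_add_norm_diff)
    also have "\<dots> \<le> capped_sup_norm K x + e"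
      using capped_sup_norm_upper[OF time_change_in_unit_interval[OF la t], of K x] close[OF t]
      by (simp add: norm_minus_commute add_mono)
    finally show "min K (norm (y t)) \<le> capped_sup_norm K x + e" .
  qed
  moreover have "capped_sup_norm K x \<le> capped_sup_norm K y + e"
  proof (rule capped_sup_norm_least)
    fix s :: real assume "s \<in> {0..1}"
    then obtain t where t: "t \<in> {0..1}" "la t = s"
      using time_change_onto[OF la] by blast
    have "min K (norm (x s)) \<le> min K (norm (y t)) + norm (x (la t) - y t)"
      using min_norm_le_add_norm_diff[of K "x (la t)" "y t"] t(2) by simp
    also have "\<dots> \<le> capped_sup_norm K y + e"
      using capped_sup_norm_upper[OF t(1), of K y] close[OF t(1)] by (rule add_mono)
    finally show "min K (norm (x s)) \<le> capped_sup_norm K y + e" .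
  qed
  ultimately show ?thesis
    by linarith
qed

lemma sup_norm_cutoff_skorokhod_continuous:
  "skorokhod_continuous (sup_norm_cutoff K :: (real \<Rightarrow> 'a::real_normed_vector) \<Rightarrow> real)"
  unfolding skorokhod_continuous_def
proof (intro allI impI exI conjI)
  fix x y :: "real \<Rightarrow> 'a" and e :: real
  assume "cadlag x" "0 < e" "cadlag y" and dist: "skorokhod_dist x y < e"
  obtain Bx where Bx: "\<And>t. t \<in> {0..1} \<Longrightarrow> norm (x t) \<le> Bx"
    using cadlag_bounded[OF \<open>cadlag x\<close>] by blast
  obtain By where By: "\<And>t. t \<in> {0..1} \<Longrightarrow> norm (y t) \<le> By"
    using cadlag_bounded[OF \<open>cadlag y\<close>] by blast
  have "time_change (\<lambda>t. t)"
    unfolding time_change_def by (auto simp: strict_mono_on_def)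
  then obtain la where la: "time_change la"
    and "max (SUP t\<in>{0..1}. \<bar>la t - t\<bar>) (SUP t\<in>{0..1}. norm (x (la t) - y t)) < e"
    using cInf_lessD[OF _ dist[unfolded skorokhod_dist_def]] by blast
  then have sup_lt: "(SUP t\<in>{0..1}. norm (x (la t) - y t)) < e"
    by simp
  have bdd: "bdd_above ((\<lambda>t. norm (x (la t) - y t)) ` {0..1})"
  proof (rule bdd_aboveI2)
    fix t :: real assume t: "t \<in> {0..1}"
    show "norm (x (la t) - y t) \<le> Bx + By"
      using norm_triangle_ineq4[of "x (la t)" "y t"] Bx[OF time_change_in_unit_interval[OF la t]] By[OF t]
      by linarith
  qed
  have "norm (x (la t) - y t) \<le> (SUP t\<in>{0..1}. norm (x (la t) - y t))" if "t \<in> {0..1}" for t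
    by (rule cSUP_upper[OF that bdd])
  then have "\<bar>capped_sup_norm K x - capped_sup_norm K y\<bar> \<le> (SUP t\<in>{0..1}. norm (x (la t) - y t))"
    by (rule capped_sup_norm_time_change_diff[OF la])
  then show "\<bar>sup_norm_cutoff K y - sup_norm_cutoff K x\<bar> < e"
    using sup_lt unfolding sup_norm_cutoff_def by linarith
qed

lemma SUP_closure_eq:
  fixes \<phi> :: "'a::metric_space \<Rightarrow> real"
  assumes cont: "continuous_on (closure D) \<phi>" and "D \<noteq> {}" and bdd: "bdd_above (\<phi> ` closure D)"
  shows "(SUP t\<in>closure D. \<phi> t) = (SUP t\<in>D. \<phi> t)"
proof (rule antisym)
  have bdd_D: "bdd_above (\<phi> ` D)"
    using bdd closure_subset by (rule bdd_above_mono[OF _ image_mono])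
  show "(SUP t\<in>closure D. \<phi> t) \<le> (SUP t\<in>D. \<phi> t)"
  proof (rule cSUP_least)
    show "closure D \<noteq> {}"
      using \<open>D \<noteq> {}\<close> by simp
    show "\<phi> t \<le> (SUP t\<in>D. \<phi> t)" if "t \<in> closure D" for t
      using that by (rule continuous_le_on_closure[OF cont]) (rule cSUP_upper[OF _ bdd_D])
  qed
  show "(SUP t\<in>D. \<phi> t) \<le> (SUP t\<in>closure D. \<phi> t)"
    by (rule cSUP_subset_mono[OF \<open>D \<noteq> {}\<close> bdd closure_subset]) simp
qed

lemma closure_Rats_inter_atLeastAtMost:
  fixes a b :: real
  assumes "a < b"
  shows "closure (\<rat> \<inter> {a..b}) = {a..b}"
proof (rule antisym)
  show "closure (\<rat> \<inter> {a..b}) \<subseteq> {a..b}"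
    by (simp add: closure_minimal)
  have "{a..b} = closure ({a<..<b} \<inter> \<rat>)"
    using closure_open_Int_superset[of "{a<..<b}" \<rat>] assms by (simp add: Rats_closure_real)
  also have "\<dots> \<subseteq> closure (\<rat> \<inter> {a..b})"
    by (intro closure_mono) auto
  finally show "{a..b} \<subseteq> closure (\<rat> \<inter> {a..b})" .
qed

lemma measurable_sup_norm_cutoff_continuous:
  fixes W :: "'b \<Rightarrow> real \<Rightarrow> 'a::real_normed_vector"
  assumes meas: "\<And>t. t \<in> {0..1} \<Longrightarrow> (\<lambda>\<omega>. W \<omega> t) \<in> borel_measurable N"
    and cont: "\<And>\<omega>. \<omega> \<in> space N \<Longrightarrow> continuous_on {0..1} (W \<omega>)"
  shows "(\<lambda>\<omega>. sup_norm_cutoff K (W \<omega>)) \<in> borel_measurable N"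
proof -
  have closure: "closure (\<rat> \<inter> {0..1}) = {0..1::real}"
    by (rule closure_Rats_inter_atLeastAtMost) simp
  have "capped_sup_norm K (W \<omega>) = (SUP t\<in>\<rat> \<inter> {0..1}. min K (norm (W \<omega> t)))" if "\<omega> \<in> space N" for \<omega>
  proof -
    have "continuous_on (closure (\<rat> \<inter> {0..1})) (\<lambda>t. min K (norm (W \<omega> t)))"
      unfolding closure using cont[OF that] by (intro continuous_intros)
    moreover have "\<rat> \<inter> {0..1::real} \<noteq> {}"
      using IntI[OF Rats_0, of "{0..1::real}"] by auto
    moreover have "bdd_above ((\<lambda>t. min K (norm (W \<omega> t))) ` closure (\<rat> \<inter> {0..1}))"
      by (intro bdd_aboveI2[where M=K]) simp
    ultimately have "(SUP t\<in>closure (\<rat> \<inter> {0..1}). min K (norm (W \<omega> t)))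
        = (SUP t\<in>\<rat> \<inter> {0..1}. min K (norm (W \<omega> t)))"
      by (rule SUP_closure_eq)
    then show ?thesis
      unfolding capped_sup_norm_def closure .
  qed
  moreover have "(\<lambda>\<omega>. SUP t\<in>\<rat> \<inter> {0..1}. min K (norm (W \<omega> t))) \<in> borel_measurable N"
    using meas by (intro borel_measurable_cSUP countable_Int1 countable_rat bdd_aboveI2[where M=K]) auto
  ultimately have "(\<lambda>\<omega>. capped_sup_norm K (W \<omega>)) \<in> borel_measurable N"
    by (simp cong: measurable_cong)
  then show ?thesis
    unfolding sup_norm_cutoff_def by measurable
qed

lemma integral_sup_norm_cutoff_tendsto_0:
  fixes W :: "'b \<Rightarrow> real \<Rightarrow> 'a::real_normed_vector"
  assumes "finite_measure N"
    and meas: "\<And>t. t \<in> {0..1} \<Longrightarrow> (\<lambda>\<omega>. W \<omega> t) \<in> borel_measurable N"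
    and cont: "\<And>\<omega>. \<omega> \<in> space N \<Longrightarrow> continuous_on {0..1} (W \<omega>)"
  shows "(\<lambda>m. \<integral>\<omega>. sup_norm_cutoff (real m) (W \<omega>) \<partial>N) \<longlonglongrightarrow> 0"
proof -
  interpret finite_measure N by fact
  have "(\<lambda>m. \<integral>\<omega>. sup_norm_cutoff (real m) (W \<omega>) \<partial>N) \<longlonglongrightarrow> (\<integral>\<omega>. 0 \<partial>N)"
  proof (rule integral_dominated_convergence[where w="\<lambda>_. 1"])
    show "AE \<omega> in N. (\<lambda>m. sup_norm_cutoff (real m) (W \<omega>)) \<longlonglongrightarrow> 0"
    proof (rule AE_I2)
      fix \<omega> assume "\<omega> \<in> space N"
      then have "compact (W \<omega> ` {0..1})"
        by (intro compact_continuous_image cont) auto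
      then obtain b where b: "\<And>t. t \<in> {0..1} \<Longrightarrow> norm (W \<omega> t) \<le> b"
        by (meson bounded_iff compact_imp_bounded imageI)
      have "\<forall>\<^sub>F m in sequentially. b + 1 \<le> real m"
        using eventually_ge_at_top[of "nat \<lceil>b + 1\<rceil>"] by eventually_elim linarith
      then have "\<forall>\<^sub>F m in sequentially. sup_norm_cutoff (real m) (W \<omega>) = 0"
      proof eventually_elim
        case (elim m)
        show ?case
          by (rule sup_norm_cutoff_eq_0) (use b elim in fastforce)
      qed
      then show "(\<lambda>m. sup_norm_cutoff (real m) (W \<omega>)) \<longlonglongrightarrow> 0"
        by (rule tendsto_eventually)
    qed
    show "AE \<omega> in N. norm (sup_norm_cutoff (real m) (W \<omega>)) \<le> 1" for m
      by (intro AE_I2) (simp add: sup_norm_cutoff_bounds)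
  qed (use measurable_sup_norm_cutoff_continuous[OF meas cont] in auto)
  then show ?thesis
    by simp
qed

definition partial_sum_process :: "(int \<Rightarrow> 'w \<Rightarrow> 'a::real_normed_vector) \<Rightarrow> nat \<Rightarrow> 'w \<Rightarrow> real \<Rightarrow> 'a" where
  "partial_sum_process e n \<omega> t = (1 / sqrt (real n)) *\<^sub>R (\<Sum>i=1..nat \<lfloor>t * real n\<rfloor>. e (int i) \<omega>)"

lemma measurable_sup_norm_cutoff_partial_sum_process:
  fixes e :: "int \<Rightarrow> 'w \<Rightarrow> 'a::{real_normed_vector, second_countable_topology}"
  assumes "\<And>i. e i \<in> borel_measurable M"
  shows "(\<lambda>\<omega>. sup_norm_cutoff K (partial_sum_process e n \<omega>)) \<in> borel_measurable M"
proof -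
  define J where "J = (\<lambda>t. nat \<lfloor>t * real n\<rfloor>) ` {0..1::real}"
  have "nat \<lfloor>t * real n\<rfloor> \<le> n" if "t \<in> {0..1}" for t
  proof -
    have "t * real n \<le> real n"
      using that by (simp add: mult_left_le_one_le)
    then show ?thesis
      using floor_mono by (fastforce simp: nat_le_iff)
  qed
  then have "J \<subseteq> {..n}"
    unfolding J_def by auto
  then have "countable J"
    by (meson countable_finite finite_atMost finite_subset)
  have "capped_sup_norm K (partial_sum_process e n \<omega>)
      = (SUP j\<in>J. min K (norm ((1 / sqrt (real n)) *\<^sub>R (\<Sum>i=1..j. e (int i) \<omega>))))" for \<omega>
    unfolding capped_sup_norm_def partial_sum_process_def J_def by (simp add: image_image)
  moreover have "(\<lambda>\<omega>. SUP j\<in>J. min K (norm ((1 / sqrt (real n)) *\<^sub>R (\<Sum>i=1..j. e (int i) \<omega>)))) \<in> borel_measurable M"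
    using assms \<open>countable J\<close> by (intro borel_measurable_cSUP bdd_aboveI2[where M=K]) auto
  ultimately show ?thesis
    unfolding sup_norm_cutoff_def by simp
qed

lemma prob_max_partial_sum_le_integral_cutoff:
  fixes e :: "int \<Rightarrow> 'w \<Rightarrow> 'a::{real_normed_vector, second_countable_topology}"
  assumes "finite_measure M" and meas: "\<And>i. e i \<in> borel_measurable M" and "n \<ge> 1"
  shows "measure M {\<omega>\<in>space M. \<exists>j\<in>{1..n}. K * sqrt (real n) < norm (\<Sum>i=1..j. e (int i) \<omega>)}
      \<le> (\<integral>\<omega>. sup_norm_cutoff K (partial_sum_process e n \<omega>) \<partial>M)"
proof -
  interpret finite_measure M by fact
  define Bad where "Bad = {\<omega>\<in>space M. \<exists>j\<in>{1..n}. K * sqrt (real n) < norm (\<Sum>i=1..j. e (int i) \<omega>)}"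
  note meas[measurable]
  have "Bad \<in> sets M"
    unfolding Bad_def by measurable
  have "indicator Bad \<omega> \<le> sup_norm_cutoff K (partial_sum_process e n \<omega>)" for \<omega>
  proof (cases "\<omega> \<in> Bad")
    case True
    then obtain j where j: "j \<in> {1..n}" "K * sqrt (real n) < norm (\<Sum>i=1..j. e (int i) \<omega>)"
      unfolding Bad_def by blast
    have "partial_sum_process e n \<omega> (real j / real n) = (1 / sqrt (real n)) *\<^sub>R (\<Sum>i=1..j. e (int i) \<omega>)"
      using \<open>n \<ge> 1\<close> by (simp add: partial_sum_process_def)
    then have "K \<le> norm (partial_sum_process e n \<omega> (real j / real n))"
      using j(2) \<open>n \<ge> 1\<close> by (simp add: field_simps)
    then have "sup_norm_cutoff K (partial_sum_process e n \<omega>) = 1"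
      using j(1) by (intro sup_norm_cutoff_eq_1[of "real j / real n"]) auto
    then show ?thesis
      using True by simp
  qed (simp add: sup_norm_cutoff_bounds)
  then have "(\<integral>\<omega>. indicator Bad \<omega> \<partial>M) \<le> (\<integral>\<omega>. sup_norm_cutoff K (partial_sum_process e n \<omega>) \<partial>M)"
    using \<open>Bad \<in> sets M\<close> measurable_sup_norm_cutoff_partial_sum_process[OF meas, where K=K and n=n]
    by (intro integral_mono integrable_const_bound[where B=1])
      (auto simp: sup_norm_cutoff_bounds)
  then show ?thesis
    using \<open>Bad \<in> sets M\<close> by (simp add: Bad_def)
qed

lemma partial_sums_bounded_in_probability:
  fixes e :: "int \<Rightarrow> 'w \<Rightarrow> 'a::{real_inner, second_countable_topology}" and W :: "'b \<Rightarrow> real \<Rightarrow> 'a"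
  assumes "finite_measure M" and meas: "\<And>i. e i \<in> borel_measurable M" and "hilbert_BM N W C"
    and weak: "weak_conv_D M (partial_sum_process e) N W" and "\<eta> > 0"
  shows "\<exists>K. \<forall>\<^sub>F n in sequentially.
     measure M {\<omega>\<in>space M. \<exists>j\<in>{1..n}. K * sqrt (real n) < norm (\<Sum>i=1..j. e (int i) \<omega>)} < \<eta>"
proof -
  have "finite_measure N" and W_meas: "\<And>t. t \<in> {0..1} \<Longrightarrow> (\<lambda>\<omega>. W \<omega> t) \<in> borel_measurable N"
    and W_cont: "\<And>\<omega>. \<omega> \<in> space N \<Longrightarrow> continuous_on {0..1} (W \<omega>)"
    using \<open>hilbert_BM N W C\<close> unfolding hilbert_BM_def by (auto simp: prob_space_def)
  have "\<forall>\<^sub>F m in sequentially. (\<integral>\<omega>. sup_norm_cutoff (real m) (W \<omega>) \<partial>N) < \<eta>"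
    using integral_sup_norm_cutoff_tendsto_0[OF \<open>finite_measure N\<close> W_meas W_cont] \<open>\<eta> > 0\<close>
    by (rule order_tendstoD)
  then obtain m where m: "(\<integral>\<omega>. sup_norm_cutoff (real m) (W \<omega>) \<partial>N) < \<eta>"
    by (auto simp: eventually_sequentially)
  have "(\<lambda>n. \<integral>\<omega>. sup_norm_cutoff (real m) (partial_sum_process e n \<omega>) \<partial>M)
      \<longlonglongrightarrow> (\<integral>\<omega>. sup_norm_cutoff (real m) (W \<omega>) \<partial>N)"
  proof -
    have "\<bar>sup_norm_cutoff (real m) x\<bar> \<le> 1" for x :: "real \<Rightarrow> 'a"
      by (simp add: sup_norm_cutoff_bounds)
    then show ?thesis
      using weak sup_norm_cutoff_skorokhod_continuous unfolding weak_conv_D_def by blast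
  qed
  then have "\<forall>\<^sub>F n in sequentially. (\<integral>\<omega>. sup_norm_cutoff (real m) (partial_sum_process e n \<omega>) \<partial>M) < \<eta>"
    using m by (rule order_tendstoD)
  then have "\<forall>\<^sub>F n in sequentially.
     measure M {\<omega>\<in>space M. \<exists>j\<in>{1..n}. real m * sqrt (real n) < norm (\<Sum>i=1..j. e (int i) \<omega>)} < \<eta>"
    using eventually_ge_at_top[of 1]
  proof eventually_elim
    case (elim n)
    then show ?case
      using prob_max_partial_sum_le_integral_cutoff[where e=e and K="real m", OF \<open>finite_measure M\<close> meas elim(2)]
      by linarith
  qed
  then show ?thesis
    by blast
qed

section \<open>Noise and projection bounds\<close>

lemma sum_scaleR_by_parts:
  fixes a :: "nat \<Rightarrow> real" and e :: "nat \<Rightarrow> 'a::real_vector"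
  shows "(\<Sum>i=1..n. a i *\<^sub>R e i)
       = a n *\<^sub>R (\<Sum>i=1..n. e i) - (\<Sum>i=1..<n. (a (Suc i) - a i) *\<^sub>R (\<Sum>l=1..i. e l))"
proof (induction n)
  case (Suc n)
  show ?case
  proof (cases "n = 0")
    case False
    then have "{1..<Suc n} = insert n {1..<n}"
      by auto
    then show ?thesis
      using Suc.IH by (simp add: algebra_simps)
  qed simp
qed simp

lemma bounded_variation_grid_sum_le:
  fixes f :: "real \<Rightarrow> real" and x :: "nat \<Rightarrow> real"
  assumes var: "\<And>xs. sorted xs \<Longrightarrow> set xs \<subseteq> {a..b} \<Longrightarrow> (\<Sum>j<length xs - 1. \<bar>f (xs!(Suc j)) - f (xs!j)\<bar>) \<le> V"
    and mono: "\<And>i. i \<in> {1..<n} \<Longrightarrow> x i \<le> x (Suc i)"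
    and range: "\<And>i. i \<in> {1..n} \<Longrightarrow> x i \<in> {a..b}"
  shows "(\<Sum>i=1..<n. \<bar>f (x (Suc i)) - f (x i)\<bar>) \<le> V"
proof -
  define xs where "xs = map x [1..<n+1]"
  have len: "length xs = n"
    by (simp add: xs_def)
  have nth: "xs ! j = x (Suc j)" if "j < n" for j
    using that by (simp add: xs_def nth_map nth_upt del: upt_Suc)
  have "sorted xs"
    unfolding sorted_iff_nth_Suc
  proof (intro allI impI)
    fix j assume "Suc j < length xs"
    then show "xs ! j \<le> xs ! Suc j"
      using mono[of "Suc j"] by (simp add: len nth)
  qed
  moreover have "set xs \<subseteq> {a..b}"
    using range by (auto simp: xs_def)
  moreover have "(\<Sum>j<length xs - 1. \<bar>f (xs!(Suc j)) - f (xs!j)\<bar>) = (\<Sum>i=1..<n. \<bar>f (x (Suc i)) - f (x i)\<bar>)"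
  proof -
    have "(\<Sum>j<length xs - 1. \<bar>f (xs!(Suc j)) - f (xs!j)\<bar>) = (\<Sum>j<n - 1. \<bar>f (x (Suc (Suc j))) - f (x (Suc j))\<bar>)"
      by (rule sum.cong) (auto simp: len nth)
    also have "\<dots> = (\<Sum>i=1..<n. \<bar>f (x (Suc i)) - f (x i)\<bar>)"
    proof (cases n)
      case (Suc m)
      then show ?thesis
        by (simp only: lessThan_atLeast0 One_nat_def sum.shift_bounds_Suc_ivl) simp
    qed simp
    finally show ?thesis .
  qed
  ultimately show ?thesis
    using var by metis
qed

lemma norm_kernel_weighted_centered_sum_le:
  fixes h :: "real \<Rightarrow> real" and e :: "nat \<Rightarrow> 'a::real_normed_vector"
  assumes hV: "\<And>x. x \<in> {-1..1} \<Longrightarrow> \<bar>h x\<bar> \<le> V"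
    and var: "\<And>xs. sorted xs \<Longrightarrow> set xs \<subseteq> {-1..1} \<Longrightarrow> (\<Sum>j<length xs - 1. \<bar>h (xs!(Suc j)) - h (xs!j)\<bar>) \<le> V"
    and "k \<le> n" and "n > 0"
    and S: "\<And>j. j \<in> {1..n} \<Longrightarrow> norm (\<Sum>i=1..j. e i) \<le> S"
  shows "norm (\<Sum>i=1..n. h ((real i - real k) / real n) *\<^sub>R (e i - (1 / real n) *\<^sub>R (\<Sum>j=1..n. e j))) \<le> 3 * V * S"
proof -
  define a where "a i = h ((real i - real k) / real n)" for i
  have a_le: "\<bar>a i\<bar> \<le> V" if "i \<in> {1..n}" for i
    unfolding a_def using that \<open>k \<le> n\<close> \<open>n > 0\<close> by (intro hV) (auto simp: field_simps)
  have "n \<in> {1..n}"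
    using \<open>n > 0\<close> by simp
  then have "V \<ge> 0" "S \<ge> 0"
    using a_le S abs_ge_zero norm_ge_zero by (meson order_trans)+
  have tv: "(\<Sum>i=1..<n. \<bar>a (Suc i) - a i\<bar>) \<le> V"
    unfolding a_def using \<open>k \<le> n\<close> \<open>n > 0\<close>
    by (intro bounded_variation_grid_sum_le[OF var]) (auto simp: field_simps divide_right_mono)
  have "norm (\<Sum>i=1..n. a i *\<^sub>R e i)
      \<le> norm (a n *\<^sub>R (\<Sum>i=1..n. e i)) + norm (\<Sum>i=1..<n. (a (Suc i) - a i) *\<^sub>R (\<Sum>l=1..i. e l))"
    unfolding sum_scaleR_by_parts by (rule norm_triangle_ineq4)
  also have "norm (a n *\<^sub>R (\<Sum>i=1..n. e i)) \<le> V * S"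
    using a_le[of n] S[of n] \<open>n > 0\<close> by (simp add: mult_mono')
  also have "norm (\<Sum>i=1..<n. (a (Suc i) - a i) *\<^sub>R (\<Sum>l=1..i. e l)) \<le> (\<Sum>i=1..<n. \<bar>a (Suc i) - a i\<bar> * S)"
    using S by (intro order_trans[OF norm_sum] sum_mono) (auto intro!: mult_left_mono)
  also have "\<dots> \<le> V * S"
    using tv \<open>S \<ge> 0\<close> by (simp add: sum_distrib_right[symmetric] mult_right_mono)
  finally have by_parts: "norm (\<Sum>i=1..n. a i *\<^sub>R e i) \<le> 2 * V * S"
    by (simp add: algebra_simps)
  have "\<bar>\<Sum>i=1..n. a i\<bar> \<le> (\<Sum>i=1..n. V)"
    by (rule order_trans[OF sum_abs sum_mono[OF a_le]])
  then have "\<bar>(\<Sum>i=1..n. a i) / real n\<bar> \<le> V"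
    using \<open>n > 0\<close> by (simp add: abs_divide divide_le_eq mult.commute)
  then have mean: "norm (((\<Sum>i=1..n. a i) / real n) *\<^sub>R (\<Sum>j=1..n. e j)) \<le> V * S"
    unfolding norm_scaleR using S[OF \<open>n \<in> {1..n}\<close>] by (intro mult_mono') auto
  have "(\<Sum>i=1..n. a i *\<^sub>R (e i - (1 / real n) *\<^sub>R (\<Sum>j=1..n. e j)))
      = (\<Sum>i=1..n. a i *\<^sub>R e i) - ((\<Sum>i=1..n. a i) / real n) *\<^sub>R (\<Sum>j=1..n. e j)"
    by (simp add: scaleR_diff_right sum_subtractf scaleR_sum_left[symmetric] sum_divide_distrib)
  then have "norm (\<Sum>i=1..n. a i *\<^sub>R (e i - (1 / real n) *\<^sub>R (\<Sum>j=1..n. e j))) \<le> 2 * V * S + V * S"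
    using order_trans[OF norm_triangle_ineq4 add_mono[OF by_parts mean]] by simp
  then show ?thesis
    by (simp add: a_def algebra_simps)
qed

lemma half_sq_le_sq_add:
  fixes u w :: real
  shows "u\<^sup>2 / 2 - w\<^sup>2 \<le> (u + w)\<^sup>2"
  using zero_le_power2[of "u + 2 * w"] by (simp add: power2_eq_square algebra_simps)

lemma sq_inner_sign_perturbed_ge:
  fixes D v u :: "'a::real_inner"
  assumes "norm v = 1" and close: "norm (v - sgn (inner v u) *\<^sub>R u) \<le> \<delta>" and "\<delta> < 1"
  shows "(inner D u)\<^sup>2 / 2 - (norm D)\<^sup>2 * \<delta>\<^sup>2 \<le> (inner D v)\<^sup>2"
proof -
  define s where "s = sgn (inner v u)"
  define w where "w = v - s *\<^sub>R u"
  have "s \<noteq> 0"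
    using close \<open>norm v = 1\<close> \<open>\<delta> < 1\<close> by (auto simp: s_def)
  then have "s\<^sup>2 = 1"
    by (auto simp: s_def sgn_if)
  have "\<bar>inner D w\<bar> \<le> norm D * \<delta>"
    using Cauchy_Schwarz_ineq2[of D w] close by (simp add: w_def s_def order_trans mult_left_mono)
  then have "(inner D w)\<^sup>2 \<le> (norm D)\<^sup>2 * \<delta>\<^sup>2"
    by (metis abs_ge_zero power2_abs power_mono power_mult_distrib)
  moreover have "inner D v = s * inner D u + inner D w"
    by (simp add: w_def inner_diff_right)
  then have "(s * inner D u)\<^sup>2 / 2 - (inner D w)\<^sup>2 \<le> (inner D v)\<^sup>2"
    using half_sq_le_sq_add by simp
  ultimately show ?thesis
    using \<open>s\<^sup>2 = 1\<close> by (simp add: power_mult_distrib)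
qed

lemma sum_sq_inner_sign_perturbed_ge:
  fixes D :: "'a::real_inner" and v u :: "nat \<Rightarrow> 'a"
  assumes "d \<ge> 1" and "0 < c" "c \<le> 1"
    and norm_v: "\<And>p. p \<in> {1..d} \<Longrightarrow> norm (v p) = 1"
    and close: "\<And>p. p \<in> {1..d} \<Longrightarrow> norm (v p - sgn (inner (v p) (u p)) *\<^sub>R u p) \<le> c / (4 * real d)"
    and proj: "c * (norm D)\<^sup>2 \<le> (\<Sum>p=1..d. (inner D (u p))\<^sup>2)"
  shows "c / 4 * (norm D)\<^sup>2 \<le> (\<Sum>p=1..d. (inner D (v p))\<^sup>2)"
proof -
  define \<delta> where "\<delta> = c / (4 * real d)"
  have "\<delta> \<le> c / 4"
    unfolding \<delta>_def using \<open>d \<ge> 1\<close> \<open>0 < c\<close> by (intro divide_left_mono) auto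
  then have "\<delta> < 1"
    using \<open>c \<le> 1\<close> by simp
  have "real d * \<delta>\<^sup>2 = c / 16 * (c / real d)"
    using \<open>d \<ge> 1\<close> by (simp add: \<delta>_def power2_eq_square field_simps)
  also have "\<dots> \<le> c / 16"
    using \<open>d \<ge> 1\<close> \<open>0 < c\<close> \<open>c \<le> 1\<close> by (intro mult_left_le) (auto simp: divide_le_eq)
  finally have d\<delta>: "real d * \<delta>\<^sup>2 \<le> c / 16" .
  have "(\<Sum>p=1..d. (inner D (u p))\<^sup>2) / 2 - real d * ((norm D)\<^sup>2 * \<delta>\<^sup>2)
      = (\<Sum>p=1..d. (inner D (u p))\<^sup>2 / 2 - (norm D)\<^sup>2 * \<delta>\<^sup>2)"
    by (simp add: sum_subtractf sum_divide_distrib)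
  also have "\<dots> \<le> (\<Sum>p=1..d. (inner D (v p))\<^sup>2)"
    using norm_v close \<open>\<delta> < 1\<close> unfolding \<delta>_def by (intro sum_mono sq_inner_sign_perturbed_ge) auto
  finally have "(\<Sum>p=1..d. (inner D (u p))\<^sup>2) / 2 - real d * \<delta>\<^sup>2 * (norm D)\<^sup>2 \<le> (\<Sum>p=1..d. (inner D (v p))\<^sup>2)"
    by (simp add: algebra_simps)
  moreover have "real d * \<delta>\<^sup>2 * (norm D)\<^sup>2 \<le> c / 16 * (norm D)\<^sup>2"
    by (rule mult_right_mono[OF d\<delta>]) simp
  moreover have "c / 16 * (norm D)\<^sup>2 = c * (norm D)\<^sup>2 / 16" "c / 4 * (norm D)\<^sup>2 = c * (norm D)\<^sup>2 / 4"
    by simp_all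
  moreover have "0 \<le> c * (norm D)\<^sup>2"
    using \<open>0 < c\<close> by simp
  ultimately show ?thesis
    using proj by linarith
qed

lemma kernel_score_decomposition:
  fixes D \<mu> z :: "'a::real_inner" and e :: "nat \<Rightarrow> 'a" and g :: "real \<Rightarrow> real" and a :: "nat \<Rightarrow> real"
  shows "(\<Sum>i=1..n. a i * (inner (\<mu> + g (real i / real n) *\<^sub>R D + e i) z
           - (\<Sum>j=1..n. inner (\<mu> + g (real j / real n) *\<^sub>R D + e j) z) / real n))
       = (\<Sum>i=1..n. a i * (g (real i / real n) - (\<Sum>j=1..n. g (real j / real n)) / real n)) * inner D z
         + inner (\<Sum>i=1..n. a i *\<^sub>R (e i - (1 / real n) *\<^sub>R (\<Sum>j=1..n. e j))) z"
proof (cases "n = 0")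
  case False
  have "(\<Sum>j=1..n. inner (\<mu> + g (real j / real n) *\<^sub>R D + e j) z) / real n
      = inner \<mu> z + (\<Sum>j=1..n. g (real j / real n)) / real n * inner D z + (\<Sum>j=1..n. inner (e j) z) / real n"
    using False by (simp add: inner_add_left sum.distrib sum_distrib_right add_divide_distrib)
  then show ?thesis
    by (simp add: inner_add_left inner_diff_left inner_sum_left algebra_simps sum.distrib
        sum_subtractf sum_distrib_left sum_distrib_right sum_divide_distrib)
qed simp

section \<open>Divergence of the statistic\<close>

lemma T_PC_ge_kernel_scores:
  fixes \<eta> :: "nat \<Rightarrow> nat \<Rightarrow> real" and lam :: "nat \<Rightarrow> real"
  assumes k: "k \<in> {1..<n}" and lam: "\<And>p. p \<in> {1..d} \<Longrightarrow> 0 < lam p \<and> lam p \<le> \<Lambda>"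
  shows "sqrt ((\<Sum>p=1..d. (\<Sum>i=1..n. h ((real i - real k) / real n) * (\<eta> i p - (\<Sum>j=1..n. \<eta> j p) / real n))\<^sup>2)
           / (\<Lambda> * real n)) \<le> T_PC h d \<eta> lam n"
proof -
  define val where "val k' = (\<Sum>p=1..d. (1 / lam p) * (1 / real n) *
      (\<Sum>i=1..n. h ((real i - real k') / real n) * (\<eta> i p - (\<Sum>j=1..n. \<eta> j p) / real n))\<^sup>2)" for k'
  define Q where "Q p = (\<Sum>i=1..n. h ((real i - real k) / real n) * (\<eta> i p - (\<Sum>j=1..n. \<eta> j p) / real n))" for p
  have "(Q p)\<^sup>2 / (\<Lambda> * real n) \<le> (1 / lam p) * (1 / real n) * (Q p)\<^sup>2" if "p \<in> {1..d}" for p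
  proof -
    have "1 / \<Lambda> \<le> 1 / lam p"
      using lam[OF that] by (intro divide_left_mono) auto
    then have "1 / \<Lambda> * (1 / real n) * (Q p)\<^sup>2 \<le> (1 / lam p) * (1 / real n) * (Q p)\<^sup>2"
      by (intro mult_right_mono) auto
    then show ?thesis
      by simp
  qed
  then have "(\<Sum>p=1..d. (Q p)\<^sup>2) / (\<Lambda> * real n) \<le> (\<Sum>p=1..d. (1 / lam p) * (1 / real n) * (Q p)\<^sup>2)"
    unfolding sum_divide_distrib by (rule sum_mono)
  also have "\<dots> = val k"
    by (simp add: val_def Q_def)
  also have "\<dots> \<le> Max (val ` {1..<n})"
    using k by (intro Max_ge) auto
  finally show ?thesis
    unfolding T_PC_def val_def Q_def by (rule real_sqrt_le_mono)
qed

lemma T_PC_gt_if_kernel_scores_large: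
  fixes \<eta> :: "nat \<Rightarrow> nat \<Rightarrow> real" and lam :: "nat \<Rightarrow> real"
  assumes k: "k \<in> {1..<n}" and "d \<ge> 1" and lam: "\<And>p. p \<in> {1..d} \<Longrightarrow> 0 < lam p \<and> lam p \<le> \<Lambda>"
    and large: "(B\<^sup>2 + 1) * \<Lambda> * real n
      \<le> (\<Sum>p=1..d. (\<Sum>i=1..n. h ((real i - real k) / real n) * (\<eta> i p - (\<Sum>j=1..n. \<eta> j p) / real n))\<^sup>2)"
  shows "B < T_PC h d \<eta> lam n"
proof -
  have "\<Lambda> * real n > 0"
    using lam[of 1] \<open>d \<ge> 1\<close> k by auto
  then have "B\<^sup>2 < (\<Sum>p=1..d. (\<Sum>i=1..n. h ((real i - real k) / real n) * (\<eta> i p - (\<Sum>j=1..n. \<eta> j p) / real n))\<^sup>2)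
      / (\<Lambda> * real n)"
    using large by (simp add: less_divide_eq algebra_simps)
  then have "B < sqrt ((\<Sum>p=1..d. (\<Sum>i=1..n. h ((real i - real k) / real n) * (\<eta> i p - (\<Sum>j=1..n. \<eta> j p) / real n))\<^sup>2)
      / (\<Lambda> * real n))"
    by (rule real_less_rsqrt)
  also have "\<dots> \<le> T_PC h d \<eta> lam n"
    using k lam by (rule T_PC_ge_kernel_scores)
  finally show ?thesis .
qed

lemma sum_sq_kernel_scores_ge:
  fixes D \<mu> :: "'a::real_inner" and e v u :: "nat \<Rightarrow> 'a" and g h :: "real \<Rightarrow> real"
  assumes "k \<le> n" and "n > 0" and "d \<ge> 1" and "0 < c" and "c \<le> 1"
    and norm_v: "\<And>p. p \<in> {1..d} \<Longrightarrow> norm (v p) = 1"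
    and close: "\<And>p. p \<in> {1..d} \<Longrightarrow> norm (v p - sgn (inner (v p) (u p)) *\<^sub>R u p) \<le> c / (4 * real d)"
    and proj: "c * (norm D)\<^sup>2 \<le> (\<Sum>p=1..d. (inner D (u p))\<^sup>2)"
    and hV: "\<And>x. x \<in> {-1..1} \<Longrightarrow> \<bar>h x\<bar> \<le> V"
    and var: "\<And>xs. sorted xs \<Longrightarrow> set xs \<subseteq> {-1..1} \<Longrightarrow> (\<Sum>j<length xs - 1. \<bar>h (xs!(Suc j)) - h (xs!j)\<bar>) \<le> V"
    and kernel: "\<kappa> * real n \<le> \<bar>\<Sum>i=1..n. h ((real i - real k) / real n) *
        (g (real i / real n) - (\<Sum>j=1..n. g (real j / real n)) / real n)\<bar>" and "\<kappa> > 0"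
    and S: "\<And>j. j \<in> {1..n} \<Longrightarrow> norm (\<Sum>i=1..j. e i) \<le> S"
    and signal_vs_noise: "16 * real d * (3 * V * S)\<^sup>2 \<le> c * \<kappa>\<^sup>2 * ((real n)\<^sup>2 * (norm D)\<^sup>2)"
  shows "c * \<kappa>\<^sup>2 * ((real n)\<^sup>2 * (norm D)\<^sup>2) / 16
    \<le> (\<Sum>p=1..d. (\<Sum>i=1..n. h ((real i - real k) / real n) *
          (inner (\<mu> + g (real i / real n) *\<^sub>R D + e i) (v p)
           - (\<Sum>j=1..n. inner (\<mu> + g (real j / real n) *\<^sub>R D + e j) (v p)) / real n))\<^sup>2)"
    (is "_ \<le> (\<Sum>p=1..d. (?Q p)\<^sup>2)")
proof -
  define hk where "hk i = h ((real i - real k) / real n)" for i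
  define a where "a = (\<Sum>i=1..n. hk i * (g (real i / real n) - (\<Sum>j=1..n. g (real j / real n)) / real n))"
  define E where "E = (\<Sum>i=1..n. hk i *\<^sub>R (e i - (1 / real n) *\<^sub>R (\<Sum>j=1..n. e j)))"
  have Q: "?Q p = a * inner D (v p) + inner E (v p)" for p
    unfolding a_def E_def hk_def by (rule kernel_score_decomposition)
  have "norm E \<le> 3 * V * S"
    unfolding E_def hk_def by (rule norm_kernel_weighted_centered_sum_le[OF hV var \<open>k \<le> n\<close> \<open>n > 0\<close> S])
  then have "\<bar>inner E (v p)\<bar> \<le> 3 * V * S" if "p \<in> {1..d}" for p
    using Cauchy_Schwarz_ineq2[of E "v p"] norm_v[OF that] by simp
  then have E_sq: "(inner E (v p))\<^sup>2 \<le> (3 * V * S)\<^sup>2" if "p \<in> {1..d}" for p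
    using power_mono[of "\<bar>inner E (v p)\<bar>" "3 * V * S" 2] that by simp
  have "\<kappa> * real n \<le> \<bar>a\<bar>"
    using kernel by (simp add: a_def hk_def)
  then have "(\<kappa> * real n)\<^sup>2 \<le> \<bar>a\<bar>\<^sup>2"
    using \<open>\<kappa> > 0\<close> by (intro power_mono) auto
  then have a_sq: "\<kappa>\<^sup>2 * (real n)\<^sup>2 \<le> a\<^sup>2"
    by (simp add: power_mult_distrib)
  have D_sq: "c / 4 * (norm D)\<^sup>2 \<le> (\<Sum>p=1..d. (inner D (v p))\<^sup>2)"
    by (rule sum_sq_inner_sign_perturbed_ge[OF \<open>d \<ge> 1\<close> \<open>0 < c\<close> \<open>c \<le> 1\<close> norm_v close proj])
  have "a\<^sup>2 / 2 * (\<Sum>p=1..d. (inner D (v p))\<^sup>2) - (\<Sum>p=1..d. (inner E (v p))\<^sup>2)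
      = (\<Sum>p=1..d. (a * inner D (v p))\<^sup>2 / 2 - (inner E (v p))\<^sup>2)"
    by (simp add: sum_subtractf sum_distrib_left power_mult_distrib)
  also have "\<dots> \<le> (\<Sum>p=1..d. (?Q p)\<^sup>2)"
    unfolding Q by (intro sum_mono half_sq_le_sq_add)
  finally have Q_sq: "a\<^sup>2 / 2 * (\<Sum>p=1..d. (inner D (v p))\<^sup>2) - (\<Sum>p=1..d. (inner E (v p))\<^sup>2) \<le> (\<Sum>p=1..d. (?Q p)\<^sup>2)" .
  have "\<kappa>\<^sup>2 * (real n)\<^sup>2 / 2 * (c / 4 * (norm D)\<^sup>2) \<le> a\<^sup>2 / 2 * (\<Sum>p=1..d. (inner D (v p))\<^sup>2)"
    using a_sq D_sq \<open>0 < c\<close> by (intro mult_mono) auto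
  moreover have "(\<Sum>p=1..d. (inner E (v p))\<^sup>2) \<le> real d * (3 * V * S)\<^sup>2"
    using sum_mono[of "{1..d}" "\<lambda>p. (inner E (v p))\<^sup>2" "\<lambda>p. (3 * V * S)\<^sup>2"] E_sq by simp
  ultimately show ?thesis
    using Q_sq signal_vs_noise by (simp add: field_simps)
qed

lemma T_PC_gt_if_drift_dominates:
  fixes D \<mu> :: "'a::real_inner" and e v u :: "nat \<Rightarrow> 'a" and lam :: "nat \<Rightarrow> real" and g h :: "real \<Rightarrow> real"
  assumes k: "k \<in> {1..<n}" and "d \<ge> 1" and "0 < c" and "c \<le> 1"
    and norm_v: "\<And>p. p \<in> {1..d} \<Longrightarrow> norm (v p) = 1"
    and close: "\<And>p. p \<in> {1..d} \<Longrightarrow> norm (v p - sgn (inner (v p) (u p)) *\<^sub>R u p) \<le> c / (4 * real d)"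
    and proj: "c * (norm D)\<^sup>2 \<le> (\<Sum>p=1..d. (inner D (u p))\<^sup>2)"
    and lam: "\<And>p. p \<in> {1..d} \<Longrightarrow> 0 < lam p \<and> lam p \<le> \<Lambda>"
    and hV: "\<And>x. x \<in> {-1..1} \<Longrightarrow> \<bar>h x\<bar> \<le> V"
    and var: "\<And>xs. sorted xs \<Longrightarrow> set xs \<subseteq> {-1..1} \<Longrightarrow> (\<Sum>j<length xs - 1. \<bar>h (xs!(Suc j)) - h (xs!j)\<bar>) \<le> V"
    and kernel: "\<kappa> * real n \<le> \<bar>\<Sum>i=1..n. h ((real i - real k) / real n) *
        (g (real i / real n) - (\<Sum>j=1..n. g (real j / real n)) / real n)\<bar>" and "\<kappa> > 0"
    and S: "\<And>j. j \<in> {1..n} \<Longrightarrow> norm (\<Sum>i=1..j. e i) \<le> K * sqrt (real n)"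
    and noise: "144 * real d * V\<^sup>2 * K\<^sup>2 / (c * \<kappa>\<^sup>2) \<le> real n * (norm D)\<^sup>2"
    and operator: "(B\<^sup>2 + 1) * \<Lambda> \<le> c * \<kappa>\<^sup>2 / 16 * (real n * (norm D)\<^sup>2)"
  shows "B < T_PC h d (\<lambda>i p. inner (\<mu> + g (real i / real n) *\<^sub>R D + e i) (v p)) lam n"
proof (rule T_PC_gt_if_kernel_scores_large[OF k \<open>d \<ge> 1\<close> lam])
  have "16 * real d * (3 * V * (K * sqrt (real n)))\<^sup>2
      = 144 * real d * V\<^sup>2 * K\<^sup>2 / (c * \<kappa>\<^sup>2) * (c * \<kappa>\<^sup>2 * real n)"
    using \<open>0 < c\<close> \<open>\<kappa> > 0\<close> by (simp add: power_mult_distrib)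
  also have "\<dots> \<le> real n * (norm D)\<^sup>2 * (c * \<kappa>\<^sup>2 * real n)"
    using \<open>0 < c\<close> by (intro mult_right_mono[OF noise]) simp
  also have "\<dots> = c * \<kappa>\<^sup>2 * ((real n)\<^sup>2 * (norm D)\<^sup>2)"
    by (simp add: power2_eq_square)
  finally have "c * \<kappa>\<^sup>2 * ((real n)\<^sup>2 * (norm D)\<^sup>2) / 16 \<le> (\<Sum>p=1..d. (\<Sum>i=1..n. h ((real i - real k) / real n) *
      (inner (\<mu> + g (real i / real n) *\<^sub>R D + e i) (v p)
       - (\<Sum>j=1..n. inner (\<mu> + g (real j / real n) *\<^sub>R D + e j) (v p)) / real n))\<^sup>2)"
    using k \<open>\<kappa> > 0\<close> by (intro sum_sq_kernel_scores_ge[OF _ _ \<open>d \<ge> 1\<close> \<open>0 < c\<close> \<open>c \<le> 1\<close>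
          norm_v close proj hV var kernel _ S]) auto
  moreover have "(B\<^sup>2 + 1) * \<Lambda> * real n \<le> c * \<kappa>\<^sup>2 * ((real n)\<^sup>2 * (norm D)\<^sup>2) / 16"
    using mult_right_mono[OF operator, of "real n"] by (simp add: power2_eq_square mult_ac)
  ultimately show "(B\<^sup>2 + 1) * \<Lambda> * real n \<le> (\<Sum>p=1..d. (\<Sum>i=1..n. h ((real i - real k) / real n) *
      (inner (\<mu> + g (real i / real n) *\<^sub>R D + e i) (v p)
       - (\<Sum>j=1..n. inner (\<mu> + g (real j / real n) *\<^sub>R D + e j) (v p)) / real n))\<^sup>2)"
    by linarith
qed

lemma eigenvalue_abs_le_norm:
  fixes A :: "'a::real_normed_vector \<Rightarrow>\<^sub>L 'a"
  assumes "blinfun_apply A v = m *\<^sub>R v" and "norm v = 1"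
  shows "\<bar>m\<bar> \<le> norm A"
  using norm_blinfun[of A v] assms by simp

lemma (in prob_space) diverges_in_probI:
  assumes "\<And>B \<epsilon>. \<epsilon> > 0 \<Longrightarrow> \<forall>\<^sub>F n in sequentially. 1 - \<epsilon> < prob {\<omega>\<in>space M. B < T n \<omega>}"
  shows "diverges_in_prob M T"
  unfolding diverges_in_prob_def
proof (intro allI tendstoI)
  fix B \<epsilon> :: real assume "\<epsilon> > 0"
  show "\<forall>\<^sub>F n in sequentially. dist (prob {\<omega>\<in>space M. B < T n \<omega>}) 1 < \<epsilon>"
    using assms[OF \<open>\<epsilon> > 0\<close>, of B] by eventually_elim (use prob_le_1 in \<open>auto simp: dist_real_def\<close>)
qed

lemma (in prob_space) prob_Bex_tendsto_0:
  assumes "finite I" and sets: "\<And>i n. {\<omega>\<in>space M. P i n \<omega>} \<in> events"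
    and lim: "\<And>i. i \<in> I \<Longrightarrow> (\<lambda>n. prob {\<omega>\<in>space M. P i n \<omega>}) \<longlonglongrightarrow> 0"
  shows "(\<lambda>n. prob {\<omega>\<in>space M. \<exists>i\<in>I. P i n \<omega>}) \<longlonglongrightarrow> 0"
proof (rule Lim_null_comparison)
  have "prob {\<omega>\<in>space M. \<exists>i\<in>I. P i n \<omega>} \<le> (\<Sum>i\<in>I. prob {\<omega>\<in>space M. P i n \<omega>})" for n
  proof -
    have "(\<lambda>i. {\<omega>\<in>space M. P i n \<omega>}) ` I \<subseteq> events"
      using sets by blast
    then have "prob (\<Union>i\<in>I. {\<omega>\<in>space M. P i n \<omega>}) \<le> (\<Sum>i\<in>I. prob {\<omega>\<in>space M. P i n \<omega>})"
      by (rule finite_measure_subadditive_finite[OF \<open>finite I\<close>])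
    moreover have "{\<omega>\<in>space M. \<exists>i\<in>I. P i n \<omega>} = (\<Union>i\<in>I. {\<omega>\<in>space M. P i n \<omega>})"
      by blast
    ultimately show ?thesis
      by simp
  qed
  then show "\<forall>\<^sub>F n in sequentially. norm (prob {\<omega>\<in>space M. \<exists>i\<in>I. P i n \<omega>}) \<le> (\<Sum>i\<in>I. prob {\<omega>\<in>space M. P i n \<omega>})"
    by simp
  show "(\<lambda>n. \<Sum>i\<in>I. prob {\<omega>\<in>space M. P i n \<omega>}) \<longlonglongrightarrow> 0"
    using lim by (rule tendsto_null_sum)
qed

lemma (in prob_space) prob_ge_one_minus_prob_exception:
  assumes "A \<in> events" and "E \<in> events" and "space M - E \<subseteq> A"
  shows "1 - prob E \<le> prob A"
  using finite_measure_mono[of "space M - E" A] prob_compl[of E] assms by auto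

lemma projection_count_pos:
  fixes D u :: "nat \<Rightarrow> 'a::real_inner"
  assumes "0 < c" and proj: "\<And>n. c * (norm (D n))\<^sup>2 \<le> (\<Sum>p=1..d. (inner (D n) (u p))\<^sup>2)"
    and D_lim: "filterlim (\<lambda>n. real n * (norm (D n))\<^sup>2) at_top sequentially"
  shows "d \<ge> 1"
proof (rule ccontr)
  assume "\<not> d \<ge> 1"
  then have "D n = 0" for n
    using proj[of n] \<open>0 < c\<close> by (simp add: mult_le_0_iff)
  moreover have "\<forall>\<^sub>F n in sequentially. 1 \<le> real n * (norm (D n))\<^sup>2"
    using D_lim by (simp add: filterlim_at_top)
  ultimately show False
    by simp
qed

lemma T_PC_exceeds_with_high_probability:
  fixes eps :: "int \<Rightarrow> 'w \<Rightarrow> 'a::{real_inner, second_countable_topology}"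
    and v :: "nat \<Rightarrow> nat \<Rightarrow> 'w \<Rightarrow> 'a" and lam :: "nat \<Rightarrow> nat \<Rightarrow> 'w \<Rightarrow> real" and \<Lambda> :: "nat \<Rightarrow> 'w \<Rightarrow> real"
    and D :: "nat \<Rightarrow> 'a" and u :: "nat \<Rightarrow> 'a" and g h :: "real \<Rightarrow> real" and k :: "nat \<Rightarrow> nat"
  assumes "prob_space M"
    and eps_meas: "\<And>i. eps i \<in> borel_measurable M" and v_meas: "\<And>n p. v n p \<in> borel_measurable M"
    and lam_meas: "\<And>n p. lam n p \<in> borel_measurable M" and \<Lambda>_meas: "\<And>n. \<Lambda> n \<in> borel_measurable M"
    and tight: "\<And>\<eta>. \<eta> > 0 \<Longrightarrow> \<exists>K. \<forall>\<^sub>F n in sequentially.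
       measure M {\<omega>\<in>space M. \<exists>j\<in>{1..n}. K * sqrt (real n) < norm (\<Sum>i=1..j. eps (int i) \<omega>)} < \<eta>"
    and "0 < c" and "c \<le> 1"
    and norm_v: "\<And>n p \<omega>. p \<in> {1..d} \<Longrightarrow> norm (v n p \<omega>) = 1"
    and v_conv: "\<And>p. p \<in> {1..d} \<Longrightarrow> o_P M (\<lambda>n \<omega>. norm (v n p \<omega> - sgn (inner (v n p \<omega>) (u p)) *\<^sub>R u p)) (\<lambda>n. 1)"
    and proj: "\<And>n. c * (norm (D n))\<^sup>2 \<le> (\<Sum>p=1..d. (inner (D n) (u p))\<^sup>2)"
    and lam: "\<And>n p \<omega>. p \<in> {1..d} \<Longrightarrow> 0 < lam n p \<omega> \<and> lam n p \<omega> \<le> \<Lambda> n \<omega>"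
    and \<Lambda>_small: "o_P M \<Lambda> (\<lambda>n. real n * (norm (D n))\<^sup>2)"
    and D_lim: "filterlim (\<lambda>n. real n * (norm (D n))\<^sup>2) at_top sequentially"
    and hV: "\<And>x. x \<in> {-1..1} \<Longrightarrow> \<bar>h x\<bar> \<le> V"
    and var: "\<And>xs. sorted xs \<Longrightarrow> set xs \<subseteq> {-1..1} \<Longrightarrow> (\<Sum>j<length xs - 1. \<bar>h (xs!(Suc j)) - h (xs!j)\<bar>) \<le> V"
    and "\<kappa> > 0" and kernel: "\<forall>\<^sub>F n in sequentially. 1 \<le> k n \<and> k n < n \<and>
       \<kappa> * real n \<le> \<bar>\<Sum>i=1..n. h ((real i - real (k n)) / real n) *
        (g (real i / real n) - (\<Sum>j=1..n. g (real j / real n)) / real n)\<bar>"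
    and "\<epsilon> > 0"
  shows "\<forall>\<^sub>F n in sequentially. 1 - \<epsilon> < measure M {\<omega>\<in>space M.
     B < T_PC h d (\<lambda>i p. inner (\<mu> + g (real i / real n) *\<^sub>R D n + eps (int i) \<omega>) (v n p \<omega>)) (\<lambda>p. lam n p \<omega>) n}"
proof -
  interpret prob_space M by fact
  have "d \<ge> 1"
    using \<open>0 < c\<close> proj D_lim by (rule projection_count_pos)
  define T where "T n \<omega> = T_PC h d (\<lambda>i p. inner (\<mu> + g (real i / real n) *\<^sub>R D n + eps (int i) \<omega>) (v n p \<omega>)) (\<lambda>p. lam n p \<omega>) n"
    for n \<omega>
  define \<delta> where "\<delta> = c / (4 * real d)"
  define e0 where "e0 = (c * \<kappa>\<^sup>2 / 16) / (B\<^sup>2 + 1)"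
  obtain K where wild: "\<forall>\<^sub>F n in sequentially.
       prob {\<omega>\<in>space M. \<exists>j\<in>{1..n}. K * sqrt (real n) < norm (\<Sum>i=1..j. eps (int i) \<omega>)} < \<epsilon> / 2"
    using tight[of "\<epsilon> / 2"] \<open>\<epsilon> > 0\<close> by auto
  define far where "far n = {\<omega>\<in>space M. \<exists>p\<in>{1..d}. \<delta> < norm (v n p \<omega> - sgn (inner (v n p \<omega>) (u p)) *\<^sub>R u p)}" for n
  define big where "big n = {\<omega>\<in>space M. e0 * (real n * (norm (D n))\<^sup>2) < \<bar>\<Lambda> n \<omega>\<bar>}" for n
  define wild where "wild n = {\<omega>\<in>space M. \<exists>j\<in>{1..n}. K * sqrt (real n) < norm (\<Sum>i=1..j. eps (int i) \<omega>)}" for n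
  note [measurable] = eps_meas v_meas lam_meas \<Lambda>_meas
  have events: "far n \<in> events" "big n \<in> events" "wild n \<in> events" "{\<omega>\<in>space M. B < T n \<omega>} \<in> events" for n
    unfolding far_def big_def wild_def T_def T_PC_def by measurable
  have "\<delta> > 0"
    using \<open>0 < c\<close> \<open>d \<ge> 1\<close> by (simp add: \<delta>_def)
  have "B\<^sup>2 + 1 > 0"
    using zero_le_power2[of B] by linarith
  then have e0: "(B\<^sup>2 + 1) * e0 = c * \<kappa>\<^sup>2 / 16"
    unfolding e0_def by (metis less_irrefl nonzero_mult_div_cancel_left times_divide_eq_right)
  have "e0 > 0"
    unfolding e0_def using \<open>0 < c\<close> \<open>\<kappa> > 0\<close> \<open>B\<^sup>2 + 1 > 0\<close> by simp
  have "(\<lambda>n. prob (far n)) \<longlonglongrightarrow> 0"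
    unfolding far_def using v_conv \<open>\<delta> > 0\<close> by (intro prob_Bex_tendsto_0) (auto simp: o_P_def)
  moreover have "(\<lambda>n. prob (big n)) \<longlonglongrightarrow> 0"
    using \<Lambda>_small \<open>e0 > 0\<close> by (simp add: o_P_def big_def)
  ultimately have "\<forall>\<^sub>F n in sequentially. prob (far n) + prob (big n) < \<epsilon> / 2"
    using \<open>\<epsilon> > 0\<close> by (intro order_tendstoD(2)) (auto intro: tendsto_add_zero)
  moreover have "\<forall>\<^sub>F n in sequentially. 144 * real d * V\<^sup>2 * K\<^sup>2 / (c * \<kappa>\<^sup>2) \<le> real n * (norm (D n))\<^sup>2"
    using D_lim by (simp add: filterlim_at_top)
  ultimately show ?thesis
    using wild kernel unfolding T_def[symmetric] wild_def[symmetric]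
  proof eventually_elim
    case (elim n)
    have "space M - (far n \<union> big n \<union> wild n) \<subseteq> {\<omega>\<in>space M. B < T n \<omega>}"
    proof safe
      fix \<omega> assume "\<omega> \<in> space M" "\<omega> \<notin> far n" "\<omega> \<notin> big n" "\<omega> \<notin> wild n"
      then have close: "\<And>p. p \<in> {1..d} \<Longrightarrow> norm (v n p \<omega> - sgn (inner (v n p \<omega>) (u p)) *\<^sub>R u p) \<le> c / (4 * real d)"
        and "\<Lambda> n \<omega> \<le> e0 * (real n * (norm (D n))\<^sup>2)"
        and S: "\<And>j. j \<in> {1..n} \<Longrightarrow> norm (\<Sum>i=1..j. eps (int i) \<omega>) \<le> K * sqrt (real n)"
        by (auto simp: far_def big_def wild_def \<delta>_def not_less)
      have "(B\<^sup>2 + 1) * \<Lambda> n \<omega> \<le> (B\<^sup>2 + 1) * e0 * (real n * (norm (D n))\<^sup>2)"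
        using \<open>\<Lambda> n \<omega> \<le> e0 * (real n * (norm (D n))\<^sup>2)\<close> \<open>B\<^sup>2 + 1 > 0\<close> by (simp add: mult.assoc)
      then show "B < T n \<omega>"
        unfolding T_def e0 using elim(4) \<open>\<kappa> > 0\<close>
        by (intro T_PC_gt_if_drift_dominates[OF _ \<open>d \<ge> 1\<close> \<open>0 < c\<close> \<open>c \<le> 1\<close> norm_v[where n=n and \<omega>=\<omega>]
              close proj lam[where n=n and \<omega>=\<omega>] hV var _ _ S elim(2)]) auto
    qed
    then have "1 - prob (far n \<union> big n \<union> wild n) \<le> prob {\<omega>\<in>space M. B < T n \<omega>}"
      using events by (intro prob_ge_one_minus_prob_exception) auto
    moreover have "prob (far n \<union> big n \<union> wild n) \<le> prob (far n) + prob (big n) + prob (wild n)"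
      using events by (intro order_trans[OF measure_Un_le] add_mono measure_Un_le) auto
    ultimately show ?case
      using elim(1,3) by linarith
  qed
qed

theorem theorem3p4:
  fixes M :: "'w measure"
    and eps :: "int \<Rightarrow> 'w \<Rightarrow> 'a::{real_inner,banach,second_countable_topology}"
    and mu :: 'a and Delta :: "nat \<Rightarrow> 'a" and g :: "real \<Rightarrow> real" and h :: "real \<Rightarrow> real"
    and X :: "nat \<Rightarrow> nat \<Rightarrow> 'w \<Rightarrow> 'a"
    and k :: real
    and P :: "nat set" and lam_eps :: "nat \<Rightarrow> real" and v_eps :: "nat \<Rightarrow> 'a"
    and N :: "'b measure" and W :: "'b \<Rightarrow> real \<Rightarrow> 'a"
    and Chat :: "nat \<Rightarrow> 'w \<Rightarrow> ('a \<Rightarrow>\<^sub>L 'a)"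
    and d :: nat and vhat :: "nat \<Rightarrow> nat \<Rightarrow> 'w \<Rightarrow> 'a" and lamhat :: "nat \<Rightarrow> nat \<Rightarrow> 'w \<Rightarrow> real"
    and vt :: "nat \<Rightarrow> 'a" and c :: real and \<alpha> :: real
  assumes M: "prob_space M"
    \<comment> \<open>model\<close>
    and X_def: "\<And>n i \<omega>. X n i \<omega> = mu + g (real i / real n) *\<^sub>R Delta n + eps (int i) \<omega>"
    and Delta_lim: "filterlim (\<lambda>n. real n * (norm (Delta n))\<^sup>2) at_top sequentially"
    \<comment> \<open>assumptions on g\<close>
    and g_nonconst: "\<exists>x\<in>{0..1}. \<exists>y\<in>{0..1}. g x \<noteq> g y"
    and g_bdd: "bounded (g ` {0..1})"
    and g_int: "g integrable_on {0..1}"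
    and g_pc: "piecewise_continuous_on01 g"
    and g0: "g 0 = 0"
    \<comment> \<open>(A1)\<close>
    and eps_meas: "\<And>i. eps i \<in> borel_measurable M"
    and eps_centered: "(\<integral>\<omega>. eps 0 \<omega> \<partial>M) = 0"
    and eps_stat: "strictly_stationary M eps"
    and k_gt: "k > 2"
    and eps_moment: "integrable M (\<lambda>\<omega>. norm (eps 1 \<omega>) powr k)"
    and C_summable: "(\<lambda>r. onorm (cov_op M eps r)) summable_on UNIV"
    and C_nonzero: "\<exists>x. lrv_op M eps x \<noteq> 0"
    and P_shape: "P = {1..} \<or> (\<exists>m. P = {1..m})"
    and v_eps_orth: "\<And>p q. p \<in> P \<Longrightarrow> q \<in> P \<Longrightarrow> inner (v_eps p) (v_eps q) = (if p = q then 1 else 0)"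
    and v_eps_basis: "closure (span (v_eps ` P)) = UNIV"
    and lam_eps_mono: "\<And>p q. p \<in> P \<Longrightarrow> q \<in> P \<Longrightarrow> p \<le> q \<Longrightarrow> lam_eps q \<le> lam_eps p"
    and C_decomp: "\<And>x. ((\<lambda>p. (lam_eps p * inner (v_eps p) x) *\<^sub>R v_eps p) has_sum lrv_op M eps x) P"
    and cov_summable: "(\<lambda>(p, l). \<bar>real_cov M (\<lambda>\<omega>. inner (eps 0 \<omega>) (v_eps p)) (\<lambda>\<omega>. inner (eps l \<omega>) (v_eps p))\<bar>)
                         summable_on (P \<times> (UNIV :: int set))"
    \<comment> \<open>(A2)\<close>
    and W_BM: "hilbert_BM N W (lrv_op M eps)"
    and A2: "weak_conv_D M (\<lambda>n \<omega> t. (1 / sqrt (real n)) *\<^sub>R (\<Sum>i=1..nat \<lfloor>t * real n\<rfloor>. eps (int i) \<omega>)) N W"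
    \<comment> \<open>the operator C-hat\<close>
    and Chat_data: "\<exists>F. \<forall>n \<omega>. Chat n \<omega> = F n (map (\<lambda>i. X n i \<omega>) [1..<n+1])"
    and Chat_sa: "\<And>n \<omega> x y. inner (blinfun_apply (Chat n \<omega>) x) y = inner x (blinfun_apply (Chat n \<omega>) y)"
    and Chat_psd: "\<And>n \<omega> x. 0 \<le> inner (blinfun_apply (Chat n \<omega>) x) x"
    and Chat_meas: "\<And>n. (\<lambda>\<omega>. norm (Chat n \<omega>)) \<in> borel_measurable M"
    and Chat_small: "o_P M (\<lambda>n \<omega>. norm (Chat n \<omega>)) (\<lambda>n. real n * (norm (Delta n))\<^sup>2)"
    \<comment> \<open>its top-d eigenpairs\<close>
    and vhat_meas: "\<And>n p. vhat n p \<in> borel_measurable M"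
    and lamhat_meas: "\<And>n p. lamhat n p \<in> borel_measurable M"
    and vhat_orth: "\<And>n \<omega> p q. p \<in> {1..d} \<Longrightarrow> q \<in> {1..d} \<Longrightarrow>
                      inner (vhat n p \<omega>) (vhat n q \<omega>) = (if p = q then 1 else 0)"
    and vhat_eig: "\<And>n \<omega> p. p \<in> {1..d} \<Longrightarrow> blinfun_apply (Chat n \<omega>) (vhat n p \<omega>) = lamhat n p \<omega> *\<^sub>R vhat n p \<omega>"
    and lamhat_top: "\<And>n \<omega> p u m. p \<in> {1..d} \<Longrightarrow> u \<noteq> 0 \<Longrightarrow> blinfun_apply (Chat n \<omega>) u = m *\<^sub>R u \<Longrightarrow>
                      (\<forall>q\<in>{1..<p}. inner u (vhat n q \<omega>) = 0) \<Longrightarrow> m \<le> lamhat n p \<omega>"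
    and lamhat_pos: "\<And>n \<omega> p. p \<in> {1..d} \<Longrightarrow> 0 < lamhat n p \<omega>"
    \<comment> \<open>the limits v-tilde\<close>
    and vt_orth: "\<And>p q. p \<in> {1..d} \<Longrightarrow> q \<in> {1..d} \<Longrightarrow> inner (vt p) (vt q) = (if p = q then 1 else 0)"
    and vhat_conv: "\<And>p. p \<in> {1..d} \<Longrightarrow>
        o_P M (\<lambda>n \<omega>. norm (vhat n p \<omega> - sgn (inner (vhat n p \<omega>) (vt p)) *\<^sub>R vt p)) (\<lambda>n. 1)"
    and c_pos: "0 < c" and c_le: "c \<le> 1"
    and Delta_proj: "\<And>n. (\<Sum>p=1..d. (inner (Delta n) (vt p))\<^sup>2) \<ge> c * (norm (Delta n))\<^sup>2"
    \<comment> \<open>assumptions on h\<close>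
    and h_nonconst: "\<exists>x\<in>{-1..1}. \<exists>y\<in>{-1..1}. h x \<noteq> h y"
    and h_zero: "\<And>x. x \<in> {-1..0} \<Longrightarrow> h x = 0"
    and h_bv: "bounded_variation_on h (-1) 1"
    and alpha_pos: "\<alpha> > 0"
    and h_holder: "holder_on \<alpha> {0..1} h"
    and hg: "(SUP t\<in>{0..1}. \<bar>integral {0..1} (\<lambda>x. h (x - t) * g x)
               - integral {0..1} g * integral {0..1} (\<lambda>x. h (x - t))\<bar>) > 0"
  shows "diverges_in_prob M (\<lambda>n \<omega>. T_PC h d (\<lambda>i p. inner (X n i \<omega>) (vhat n p \<omega>)) (\<lambda>p. lamhat n p \<omega>) n)"
proof -
  interpret M: prob_space M
    by (rule M)
  obtain \<kappa> k where "\<kappa> > 0" and kernel: "\<forall>\<^sub>F n in sequentially. 1 \<le> k n \<and> k n < n \<and>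
     \<kappa> * real n \<le> \<bar>\<Sum>i=1..n. h ((real i - real (k n)) / real n) *
        (g (real i / real n) - (\<Sum>j=1..n. g (real j / real n)) / real n)\<bar>"
    using kernel_sum_lower_bound[OF g_bdd g_pc h_zero h_bv alpha_pos h_holder hg] by blast
  obtain V where hV: "\<And>x. x \<in> {-1..1} \<Longrightarrow> \<bar>h x\<bar> \<le> V"
    and var: "\<And>xs. sorted xs \<Longrightarrow> set xs \<subseteq> {-1..1} \<Longrightarrow> (\<Sum>j<length xs - 1. \<bar>h (xs!(Suc j)) - h (xs!j)\<bar>) \<le> V"
    by (rule bounded_variation_on_bound[OF h_bv h_zero[of "-1"]]) auto
  have "weak_conv_D M (partial_sum_process eps) N W"
    using A2 by (simp add: partial_sum_process_def[abs_def])
  note tight = partial_sums_bounded_in_probability[OF M.finite_measure_axioms eps_meas W_BM this]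
  have norm_vhat: "norm (vhat n p \<omega>) = 1" if "p \<in> {1..d}" for n p \<omega>
    using vhat_orth[OF that that] by (simp add: norm_eq_sqrt_inner)
  have lamhat: "0 < lamhat n p \<omega> \<and> lamhat n p \<omega> \<le> norm (Chat n \<omega>)" if "p \<in> {1..d}" for n p \<omega>
    using lamhat_pos[OF that, of n \<omega>] eigenvalue_abs_le_norm[OF vhat_eig[OF that, of n \<omega>] norm_vhat[OF that, of n \<omega>]]
    by (simp add: abs_of_pos)
  show ?thesis
    unfolding X_def
    by (intro M.diverges_in_probI T_PC_exceeds_with_high_probability[OF M eps_meas vhat_meas lamhat_meas
          Chat_meas tight c_pos c_le norm_vhat vhat_conv Delta_proj lamhat Chat_small Delta_lim hV var
          \<open>\<kappa> > 0\<close> kernel])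
qed

end
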